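(* Under the hypotheses (A1) and (A2) of the context, suppose there is only one maximal admissible path, i.e. $\mathcal{P}_{\max}=\{\theta\}$ with $\theta=(\theta_1,\dots,\theta_\kappa)$. If $\ell=\theta_u$ for some $u\in\{1,\dots,\kappa\}$ with $\rho_\ell=\rho_{\max}$, then \[ \lim_{n\to\infty}\mathbb{E}_\pi\Big[\tfrac{1}{n+1}\#\{m\in\{0,\dots,n\}:X_m\in I_\ell\}\,\Big|\,T>n\Big]=\frac{1}{h^+_{\max}}, \] and this limit is $0$ whenever $\rho_\ell<\rho_{\max}$.
   Context: Let $d\ge2$, $P=\begin{pmatrix}1&0\\R&Q\end{pmatrix}$ stochastic with $R\in\mathbb{R}^{d\times1}$, $Q\in\mathbb{R}^{d\times d}$, $R,Q\ne0$, all eigenvalues of $Q$ of modulus $<1$; $(X_i)$ the Markov chain with transition matrix $P$ ($0$ absorbing), initial distribution $\pi$ on $\{1,\dots,d\}$, $T=\min\{i:X_i=0\}$. $Q$ is in Frobenius normal form: block lower triangular, blocks $Q_{ij}\in\mathbb{R}^{d_i\times d_j}$ ($i,j\le k$, $Q_{ij}=0$ for $j>i$), each $Q_{ii}$ eventually positive with Perron--Frobenius eigenvalue $\rho_i$ and fixed normed positive right eigenvector $v_i$; $V_i^-$ the sum of generalised eigenspaces of $Q_{ii}$ for its other eigenvalues. $I_j=\{1+\sum_{i<j}d_i,\dots,\sum_{i\le j}d_i\}$, $\pi=(\pi_1,\dots,\pi_k)$, $\pi_i\in\mathbb{R}^{1\times d_i}$. Admissible path: strictly decreasing $\theta=(\theta_1,\dots,\theta_\kappa)$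 in $\{1,\dots,k\}$ with $Q_{\theta_u\theta_{u+1}}\ne0$; $\mathcal{P}$ the set of them. $\rho(\theta)=\max_u\rho_{\theta_u}$, $h^+(\theta)=\#\{u:\rho_{\theta_u}=\rho(\theta)\}$, $\rho_{\max}=\max_i\rho_i$, $h^+_{\max}=\max\{h^+(\theta):\theta\in\mathcal{P},\rho(\theta)=\rho_{\max}\}$, $\mathcal{P}_{\max}=\{\theta\in\mathcal{P}:h^+(\theta)=h^+_{\max},\rho(\theta)=\rho_{\max}\}$. $\alpha_\theta=\alpha_{\theta_\kappa}\cdots\alpha_{\theta_1}$ with $\mathbf1=\alpha_{\theta_\kappa}v_{\theta_\kappa}+w_{\theta_\kappa}$, $w_{\theta_\kappa}\in V^-_{\theta_\kappa}$, and $Q_{\theta_u\theta_{u+1}}v_{\theta_{u+1}}=\alpha_{\theta_u}v_{\theta_u}+w_{\theta_u}$, $w_{\theta_u}\in V^-_{\theta_u}$ for $u<\kappa$. Hypotheses: (A1) for all $i\in\{1,\dots,k\}$ with $\rho_i<\rho_{\max}$, $Q_{ii}$ is scalar; (A2) there is $\theta\in\mathcal{P}_{\max}$ with $\alpha_\theta\ne0$ and $\pi_{\theta_1}v_{\theta_1}\ne0$. *)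

theory Defs
  imports "HOL-Analysis.Analysis"
begin

text \<open>A (square) matrix is a function nat => nat => 'a; only entries with both
  indices in a given finite index set I are used.  A vector is a function nat => 'a,
  only its values on I matter.\<close>

definition mvec :: "nat set \<Rightarrow> (nat \<Rightarrow> nat \<Rightarrow> 'a::comm_semiring_0) \<Rightarrow> (nat \<Rightarrow> 'a) \<Rightarrow> nat \<Rightarrow> 'a" where
  "mvec I A x = (\<lambda>r. \<Sum>s\<in>I. A r s * x s)"

definition mmul :: "nat set \<Rightarrow> (nat \<Rightarrow> nat \<Rightarrow> 'a::comm_semiring_0) \<Rightarrow> (nat \<Rightarrow> nat \<Rightarrow> 'a) \<Rightarrow> nat \<Rightarrow> nat \<Rightarrow> 'a" where
  "mmul I A B = (\<lambda>r t. \<Sum>s\<in>I. A r s * B s t)"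

primrec mpow :: "nat set \<Rightarrow> (nat \<Rightarrow> nat \<Rightarrow> 'a::comm_semiring_1) \<Rightarrow> nat \<Rightarrow> nat \<Rightarrow> nat \<Rightarrow> 'a" where
  "mpow I A 0 = (\<lambda>r s. if r = s then 1 else 0)"
| "mpow I A (Suc n) = mmul I A (mpow I A n)"

definition cmat :: "(nat \<Rightarrow> nat \<Rightarrow> real) \<Rightarrow> nat \<Rightarrow> nat \<Rightarrow> complex" where
  "cmat A = (\<lambda>r s. complex_of_real (A r s))"

definition eigenvalue_on :: "nat set \<Rightarrow> (nat \<Rightarrow> nat \<Rightarrow> complex) \<Rightarrow> complex \<Rightarrow> bool" where
  "eigenvalue_on I A \<mu> = (\<exists>x. (\<exists>r\<in>I. x r \<noteq> 0) \<and> (\<forall>r\<in>I. mvec I A x r = \<mu> * x r))"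

definition gen_eigvec :: "nat set \<Rightarrow> (nat \<Rightarrow> nat \<Rightarrow> complex) \<Rightarrow> complex \<Rightarrow> (nat \<Rightarrow> complex) \<Rightarrow> bool" where
  "gen_eigvec I A \<mu> w =
     (\<exists>m. \<forall>r\<in>I. mvec I (mpow I (\<lambda>r s. A r s - (if r = s then \<mu> else 0)) m) w r = 0)"

definition Vminus :: "nat set \<Rightarrow> (nat \<Rightarrow> nat \<Rightarrow> complex) \<Rightarrow> complex \<Rightarrow> (nat \<Rightarrow> complex) set" where
  "Vminus I A \<rho> = {w. \<exists>F wf. finite F \<and>
      (\<forall>\<mu>\<in>F. eigenvalue_on I A \<mu> \<and> \<mu> \<noteq> \<rho> \<and> gen_eigvec I A \<mu> (wf \<mu>)) \<and>
      (\<forall>r\<in>I. w r = (\<Sum>\<mu>\<in>F. wf \<mu> r))}"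

definition Vminus_real :: "nat set \<Rightarrow> (nat \<Rightarrow> nat \<Rightarrow> real) \<Rightarrow> real \<Rightarrow> (nat \<Rightarrow> real) set" where
  "Vminus_real I A \<rho> = {w. (\<lambda>r. complex_of_real (w r)) \<in> Vminus I (cmat A) (complex_of_real \<rho>)}"

definition pf_coef :: "nat set \<Rightarrow> (nat \<Rightarrow> nat \<Rightarrow> real) \<Rightarrow> real \<Rightarrow> (nat \<Rightarrow> real) \<Rightarrow> (nat \<Rightarrow> real) \<Rightarrow> real" where
  "pf_coef I A \<rho> v x = (THE a. \<exists>w. w \<in> Vminus_real I A \<rho> \<and> (\<forall>r\<in>I. x r = a * v r + w r))"

definition eventually_positive :: "nat set \<Rightarrow> (nat \<Rightarrow> nat \<Rightarrow> real) \<Rightarrow> bool" where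
  "eventually_positive I A = (\<exists>N. \<forall>n\<ge>N. \<forall>r\<in>I. \<forall>s\<in>I. mpow I A n r s > 0)"

definition is_scalar_on :: "nat set \<Rightarrow> (nat \<Rightarrow> nat \<Rightarrow> real) \<Rightarrow> bool" where
  "is_scalar_on I A = (\<exists>c. \<forall>r\<in>I. \<forall>s\<in>I. A r s = (if r = s then c else 0))"

text \<open>Block j (1 <= j <= k) with block sizes ds: I_j.\<close>
definition blk :: "(nat \<Rightarrow> nat) \<Rightarrow> nat \<Rightarrow> nat set" where
  "blk ds j = {1 + (\<Sum>i\<in>{1..<j}. ds i) .. (\<Sum>i\<in>{1..j}. ds i)}"

definition admissible :: "nat \<Rightarrow> (nat \<Rightarrow> nat) \<Rightarrow> (nat \<Rightarrow> nat \<Rightarrow> real) \<Rightarrow> nat list \<Rightarrow> bool" where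
  "admissible k ds Q \<theta> =
     (\<theta> \<noteq> [] \<and> set \<theta> \<subseteq> {1..k} \<and> sorted_wrt (>) \<theta> \<and>
      (\<forall>u. Suc u < length \<theta> \<longrightarrow>
         (\<exists>r\<in>blk ds (\<theta> ! u). \<exists>s\<in>blk ds (\<theta> ! Suc u). Q r s \<noteq> 0)))"

definition Padm :: "nat \<Rightarrow> (nat \<Rightarrow> nat) \<Rightarrow> (nat \<Rightarrow> nat \<Rightarrow> real) \<Rightarrow> nat list set" where
  "Padm k ds Q = {\<theta>. admissible k ds Q \<theta>}"

definition rho_path :: "(nat \<Rightarrow> real) \<Rightarrow> nat list \<Rightarrow> real" where
  "rho_path \<rho> \<theta> = Max (\<rho> ` set \<theta>)"

definition hplus :: "(nat \<Rightarrow> real) \<Rightarrow> nat list \<Rightarrow> nat" where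
  "hplus \<rho> \<theta> = card {u. u < length \<theta> \<and> \<rho> (\<theta> ! u) = rho_path \<rho> \<theta>}"

definition rho_max :: "nat \<Rightarrow> (nat \<Rightarrow> real) \<Rightarrow> real" where
  "rho_max k \<rho> = Max (\<rho> ` {1..k})"

definition hplus_max :: "nat \<Rightarrow> (nat \<Rightarrow> nat) \<Rightarrow> (nat \<Rightarrow> nat \<Rightarrow> real) \<Rightarrow> (nat \<Rightarrow> real) \<Rightarrow> nat" where
  "hplus_max k ds Q \<rho> = Max {hplus \<rho> \<theta> | \<theta>. \<theta> \<in> Padm k ds Q \<and> rho_path \<rho> \<theta> = rho_max k \<rho>}"

definition Pmax :: "nat \<Rightarrow> (nat \<Rightarrow> nat) \<Rightarrow> (nat \<Rightarrow> nat \<Rightarrow> real) \<Rightarrow> (nat \<Rightarrow> real) \<Rightarrow> nat list set" where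
  "Pmax k ds Q \<rho> = {\<theta>\<in>Padm k ds Q. hplus \<rho> \<theta> = hplus_max k ds Q \<rho> \<and> rho_path \<rho> \<theta> = rho_max k \<rho>}"

text \<open>alpha_{theta_u} (u 0-based here): for the last entry the coefficient of the all-one
  vector, otherwise the coefficient of Q_{theta_u theta_(u+1)} v_{theta_(u+1)}.\<close>
definition alpha_at :: "(nat \<Rightarrow> nat) \<Rightarrow> (nat \<Rightarrow> nat \<Rightarrow> real) \<Rightarrow> (nat \<Rightarrow> real) \<Rightarrow> (nat \<Rightarrow> nat \<Rightarrow> real)
    \<Rightarrow> nat list \<Rightarrow> nat \<Rightarrow> real" where
  "alpha_at ds Q \<rho> v \<theta> u =
     pf_coef (blk ds (\<theta> ! u)) Q (\<rho> (\<theta> ! u)) (v (\<theta> ! u))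
       (if Suc u = length \<theta> then (\<lambda>_. 1)
        else mvec (blk ds (\<theta> ! Suc u)) Q (v (\<theta> ! Suc u)))"

definition alpha_path :: "(nat \<Rightarrow> nat) \<Rightarrow> (nat \<Rightarrow> nat \<Rightarrow> real) \<Rightarrow> (nat \<Rightarrow> real) \<Rightarrow> (nat \<Rightarrow> nat \<Rightarrow> real)
    \<Rightarrow> nat list \<Rightarrow> real" where
  "alpha_path ds Q \<rho> v \<theta> = (\<Prod>u<length \<theta>. alpha_at ds Q \<rho> v \<theta> u)"

definition Pmat :: "(nat \<Rightarrow> real) \<Rightarrow> (nat \<Rightarrow> nat \<Rightarrow> real) \<Rightarrow> nat \<Rightarrow> nat \<Rightarrow> real" where
  "Pmat R Q i j = (if i = 0 then (if j = 0 then 1 else 0) else if j = 0 then R i else Q i j)"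

definition path_prob :: "(nat \<Rightarrow> real) \<Rightarrow> (nat \<Rightarrow> nat \<Rightarrow> real) \<Rightarrow> nat list \<Rightarrow> real" where
  "path_prob \<pi> P xs = \<pi> (hd xs) * (\<Prod>i<length xs - 1. P (xs ! i) (xs ! Suc i))"

text \<open>Trajectories (X_0,...,X_n) in {0..d} with T > n, i.e. X_m <> 0 for all m <= n.\<close>
definition surv_paths :: "nat \<Rightarrow> nat \<Rightarrow> nat list set" where
  "surv_paths d n = {xs. length xs = Suc n \<and> set xs \<subseteq> {0..d} \<and> (\<forall>m\<le>n. xs ! m \<noteq> 0)}"

text \<open>E_pi[ (1/(n+1)) #{m in {0..n}. X_m in L} | T > n ].\<close>
definition cond_occupation :: "nat \<Rightarrow> (nat \<Rightarrow> real) \<Rightarrow> (nat \<Rightarrow> real) \<Rightarrow> (nat \<Rightarrow> nat \<Rightarrow> real)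
    \<Rightarrow> nat set \<Rightarrow> nat \<Rightarrow> real" where
  "cond_occupation d \<pi> R Q L n =
     (\<Sum>xs\<in>surv_paths d n. path_prob \<pi> (Pmat R Q) xs *
          (real (card {m. m \<le> n \<and> xs ! m \<in> L}) / real (Suc n)))
     / (\<Sum>xs\<in>surv_paths d n. path_prob \<pi> (Pmat R Q) xs)"

end

theory Submission
  imports Defs "HOL-Real_Asymp.Real_Asymp" "HOL-Computational_Algebra.Formal_Power_Series"
begin

(*
  Up to absorption the chain visits the blocks along a strictly decreasing itinerary, so
  P(T > n) and the expected number of visits to I_l split into contributions of the
  itineraries \<sigma>.  The contribution of \<sigma> is an iterated convolution of the powers of the
  diagonal blocks, linked by the transition blocks.  An eventually positive block satisfies
  Q_ii^m ~ C \<rho>_i^m (Doeblin's contraction argument applied to the Doob transform by v_i), and the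
  convolution of sequences of order n^p \<alpha>^n and n^q \<beta>^n has order n^(p+q+1) \<alpha>^n if \<alpha> = \<beta>
  and the order of the faster one otherwise.  Hence the survival contribution of \<sigma> has order
  n^(h+(\<sigma>)-1) \<rho>(\<sigma>)^n, with a positive constant when all links of \<sigma> are nonzero.  If
  \<rho>_l = \<rho>(\<sigma>), counting the visits to I_l adds one factor n with the same constant, and
  negbin h n / ((n+1) negbin (h-1) n) \<rightarrow> 1/h; otherwise the expected number of visits keeps the
  order of the survival probability, and the division by n + 1 makes it negligible.  By
  uniqueness the maximal path \<theta> dominates numerator and denominator.  Positivity of the leading
  constant comes from the links themselves.
*)

section \<open>Negative binomial coefficients\<close>

definition negbin :: "nat \<Rightarrow> nat \<Rightarrow> real" where
  "negbin e n = real ((n + e) choose e)"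

lemma negbin_pos: "negbin e n > 0"
  unfolding negbin_def by simp

lemma negbin_nonzero [simp]: "negbin e n \<noteq> 0"
  using negbin_pos[of e n] by simp

lemma negbin_ge_1: "negbin e n \<ge> 1"
  unfolding negbin_def by (simp add: Suc_leI)

lemma negbin_0 [simp]: "negbin 0 n = 1"
  unfolding negbin_def by simp

lemma negbin_1: "negbin (Suc 0) n = real n + 1"
  unfolding negbin_def by simp

lemma negbin_Suc: "negbin e (Suc n) * (real n + 1) = negbin e n * (real n + 1 + real e)"
proof -
  have "(Suc (n + e) - e) * (Suc (n + e) choose e) = Suc (n + e) * (n + e choose e)"
    using binomial_absorb_comp[of "Suc (n + e)" e] by simp
  then have "real (Suc n + e choose e) * real (Suc n) = real (n + e choose e) * real (Suc (n + e))"
    by (simp only: of_nat_mult[symmetric] Suc_diff_le le_add2 diff_add_inverse2 add_Suc mult.commute)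
  then show ?thesis unfolding negbin_def by (simp add: algebra_simps)
qed

lemma negbin_Suc_order: "negbin (Suc e) n * (real e + 1) = negbin e n * (real n + 1 + real e)"
proof -
  have "real (Suc (n + e) choose Suc e) * real (Suc e) = real (n + e choose e) * real (Suc (n + e))"
    using Suc_times_binomial_eq[of "n + e" e] by (simp only: of_nat_mult[symmetric] mult.commute)
  then show ?thesis unfolding negbin_def by (simp add: algebra_simps)
qed

lemma negbin_mono: "m \<le> n \<Longrightarrow> negbin e m \<le> negbin e n"
proof (induction n rule: dec_induct)
  case (step n)
  have "negbin e n * (real n + 1) \<le> negbin e (Suc n) * (real n + 1)"
    unfolding negbin_Suc using negbin_pos[of e n] by (intro mult_left_mono) auto
  then show ?case using step.IH by simp
qed simp

lemma negbin_mono_order: "e \<le> e' \<Longrightarrow> negbin e n \<le> negbin e' n"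
proof (induction e' rule: dec_induct)
  case (step e')
  have "negbin e' n * (real e' + 1) \<le> negbin (Suc e') n * (real e' + 1)"
    unfolding negbin_Suc_order using negbin_pos[of e' n] by (intro mult_left_mono) auto
  then show ?case using step.IH by simp
qed simp

lemma negbin_gchoose: "negbin e n = (-1) ^ n * ((- real e - 1) gchoose n)"
proof -
  have "(- real e - 1) gchoose n = (-1) ^ n * (real (n + e) gchoose n)"
    by (subst gbinomial_negated_upper) (simp add: algebra_simps)
  moreover have "real (n + e) gchoose n = negbin e n"
    unfolding negbin_def binomial_gbinomial[symmetric] using binomial_symmetric[of n "n + e"] by simp
  ultimately show ?thesis by simp
qed

lemma negbin_convolution: "(\<Sum>m\<le>M. negbin p m * negbin q (M - m)) = negbin (p + q + 1) M"
proof -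
  have "(\<Sum>m\<le>M. negbin p m * negbin q (M - m))
      = (-1) ^ M * (\<Sum>m\<le>M. ((- real p - 1) gchoose m) * ((- real q - 1) gchoose (M - m)))"
    unfolding negbin_gchoose sum_distrib_left
    by (intro sum.cong refl) (auto simp: power_add[symmetric])
  also have "\<dots> = negbin (p + q + 1) M"
    using gbinomial_Vandermonde[of "- real p - 1" "- real q - 1" M]
    by (simp add: negbin_gchoose atLeast0AtMost algebra_simps)
  finally show ?thesis .
qed

lemma tendsto_negbin_ratio_Suc: "(\<lambda>n. negbin e n / negbin e (Suc n)) \<longlonglongrightarrow> 1"
proof -
  have "negbin e n / negbin e (Suc n) = (real n + 1) / (real n + 1 + real e)" for n
    using negbin_Suc[of e n] negbin_pos[of e n] negbin_pos[of e "Suc n"] by (simp add: field_simps)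
  moreover have "(\<lambda>n. (real n + 1) / (real n + 1 + real e)) \<longlonglongrightarrow> 1"
    by real_asymp
  ultimately show ?thesis by simp
qed

lemma tendsto_negbin_ratio_add: "(\<lambda>n. negbin e n / negbin e (n + k)) \<longlonglongrightarrow> 1"
proof (induction k)
  case (Suc k)
  have "(\<lambda>n. negbin e n / negbin e (n + k) * (negbin e (n + k) / negbin e (Suc (n + k)))) \<longlonglongrightarrow> 1 * 1"
    using tendsto_mult[OF Suc.IH LIMSEQ_ignore_initial_segment[OF tendsto_negbin_ratio_Suc[of e], of k]]
    by (simp add: add.commute)
  moreover have "negbin e n / negbin e (n + k) * (negbin e (n + k) / negbin e (Suc (n + k)))
      = negbin e n / negbin e (n + Suc k)" for n
    by simp
  ultimately show ?case by simp
qed simp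

lemma tendsto_negbin_ratio_order: "(\<lambda>n. negbin e n / negbin (Suc e) n) \<longlonglongrightarrow> 0"
proof -
  have "negbin e n / negbin (Suc e) n = (real e + 1) / (real n + 1 + real e)" for n
    using negbin_Suc_order[of e n] negbin_pos[of e n] negbin_pos[of "Suc e" n] by (simp add: field_simps)
  moreover have "(\<lambda>n. (real e + 1) / (real n + 1 + real e)) \<longlonglongrightarrow> 0"
    by real_asymp
  ultimately show ?thesis by simp
qed

lemma summable_negbin_power:
  assumes "0 \<le> r" "r < 1"
  shows "summable (\<lambda>n. negbin e n * r ^ n)"
proof -
  define c where "c = (1 + r) / 2"
  have "\<forall>\<^sub>F n in sequentially. (real n + 1 + real e) * r \<le> c * (real n + 1)"
    unfolding c_def using assms by real_asymp
  then obtain N where N: "\<And>n. n \<ge> N \<Longrightarrow> (real n + 1 + real e) * r \<le> c * (real n + 1)"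
    by (auto simp: eventually_sequentially)
  show ?thesis
  proof (rule summable_ratio_test[of c N])
    show "c < 1" using assms by (simp add: c_def)
    fix n assume "N \<le> n"
    have "negbin e (Suc n) * r ^ Suc n * (real n + 1) = negbin e n * r ^ n * ((real n + 1 + real e) * r)"
      using negbin_Suc[of e n] by (simp add: algebra_simps)
    also have "\<dots> \<le> negbin e n * r ^ n * (c * (real n + 1))"
      using N[OF \<open>N \<le> n\<close>] negbin_pos[of e n] assms by (intro mult_left_mono) auto
    finally have "negbin e (Suc n) * r ^ Suc n * (real n + 1) \<le> c * (negbin e n * r ^ n) * (real n + 1)"
      by (simp add: algebra_simps)
    then have "negbin e (Suc n) * r ^ Suc n \<le> c * (negbin e n * r ^ n)"
      by (rule mult_right_le_imp_le) simp
    then show "norm (negbin e (Suc n) * r ^ Suc n) \<le> c * norm (negbin e n * r ^ n)"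
      using negbin_pos[of e n] negbin_pos[of e "Suc n"] assms by simp
  qed
qed

section \<open>Sequences of order \<open>n\<^sup>e R\<^sup>n\<close>\<close>

lemma weighted_average_null:
  fixes w :: "nat \<Rightarrow> nat \<Rightarrow> real" and g :: "nat \<Rightarrow> real"
  assumes g: "g \<longlonglongrightarrow> 0" and w_nonneg: "\<And>M m. 0 \<le> w M m"
    and w_sum: "\<And>M. (\<Sum>m\<le>M. w M m) \<le> 1" and w_column: "\<And>m. (\<lambda>M. w M m) \<longlonglongrightarrow> 0"
  shows "(\<lambda>M. \<Sum>m\<le>M. w M m * g m) \<longlonglongrightarrow> 0"
proof (rule LIMSEQ_I)
  fix \<epsilon> :: real assume "\<epsilon> > 0"
  obtain C where C: "C > 0" "\<And>m. norm (g m) \<le> C"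
    using convergent_imp_Bseq[OF convergentI[OF g]] by (auto elim: BseqE)
  obtain N where N: "\<And>m. m \<ge> N \<Longrightarrow> \<bar>g m\<bar> < \<epsilon> / 2"
    using LIMSEQ_D[OF g, of "\<epsilon> / 2"] \<open>\<epsilon> > 0\<close> by auto
  have "(\<lambda>M. \<Sum>m<N. w M m) \<longlonglongrightarrow> 0"
    using tendsto_sum[of "{..<N}" "\<lambda>m M. w M m" "\<lambda>_. 0", OF w_column] by simp
  then obtain M0 where M0: "\<And>M. M \<ge> M0 \<Longrightarrow> (\<Sum>m<N. w M m) < \<epsilon> / (2 * C)"
    using LIMSEQ_D[of _ 0 "\<epsilon> / (2 * C)"] \<open>\<epsilon> > 0\<close> C(1) by fastforce
  show "\<exists>M0. \<forall>M\<ge>M0. norm ((\<Sum>m\<le>M. w M m * g m) - 0) < \<epsilon>"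
  proof (intro exI allI impI)
    fix M assume "M \<ge> M0"
    have pointwise: "\<bar>w M m * g m\<bar> \<le> C * w M m * of_bool (m < N) + \<epsilon> / 2 * w M m" for m
    proof -
      have "\<bar>g m\<bar> \<le> C * of_bool (m < N) + \<epsilon> / 2"
        using C(2)[of m] N[of m] \<open>\<epsilon> > 0\<close> by auto
      then have "w M m * \<bar>g m\<bar> \<le> w M m * (C * of_bool (m < N) + \<epsilon> / 2)"
        using w_nonneg[of M m] by (rule mult_left_mono)
      then show ?thesis using w_nonneg[of M m] by (simp add: abs_mult algebra_simps)
    qed
    have "\<bar>\<Sum>m\<le>M. w M m * g m\<bar> \<le> (\<Sum>m\<le>M. C * w M m * of_bool (m < N) + \<epsilon> / 2 * w M m)"
      by (rule order_trans[OF sum_abs sum_mono[OF pointwise]])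
    also have "\<dots> = C * (\<Sum>m\<in>{..M} \<inter> {..<N}. w M m) + \<epsilon> / 2 * (\<Sum>m\<le>M. w M m)"
      by (simp add: sum.distrib sum_distrib_left lessThan_def)
    also have "\<dots> \<le> C * (\<Sum>m<N. w M m) + \<epsilon> / 2 * 1"
      using C(1) \<open>\<epsilon> > 0\<close> w_nonneg w_sum[of M]
      by (intro add_mono mult_left_mono sum_mono2) auto
    also have "\<dots> < \<epsilon>"
      using M0[OF \<open>M \<ge> M0\<close>] C(1) by (simp add: field_simps)
    finally show "norm ((\<Sum>m\<le>M. w M m * g m) - 0) < \<epsilon>" by simp
  qed
qed

definition negbin_weight :: "nat \<Rightarrow> nat \<Rightarrow> nat \<Rightarrow> nat \<Rightarrow> real" where
  "negbin_weight p q M m = negbin p m * negbin q (M - m) / negbin (p + q + 1) M"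

lemma negbin_weight_nonneg: "negbin_weight p q M m \<ge> 0"
  unfolding negbin_weight_def using negbin_pos by (simp add: less_imp_le)

lemma sum_negbin_weight: "(\<Sum>m\<le>M. negbin_weight p q M m) = 1"
  unfolding negbin_weight_def by (simp add: sum_divide_distrib[symmetric] negbin_convolution)

lemma sum_negbin_weight_flip:
  "(\<Sum>m\<le>M. negbin_weight p q M m * f (M - m)) = (\<Sum>m\<le>M. negbin_weight q p M m * f m)"
  by (subst sum.atLeastAtMost_rev[of _ 0 M, simplified atLeast0AtMost])
     (auto intro!: sum.cong simp: negbin_weight_def add_ac mult_ac)

lemma tendsto_negbin_weight: "(\<lambda>M. negbin_weight p q M m) \<longlonglongrightarrow> 0"
proof (rule Lim_null_comparison)
  show "(\<lambda>M. negbin p m * (negbin q M / negbin (Suc q) M)) \<longlonglongrightarrow> 0"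
    using tendsto_mult_right_zero[OF tendsto_negbin_ratio_order] .
  have "negbin_weight p q M m \<le> negbin p m * (negbin q M / negbin (Suc q) M)" for M
    unfolding negbin_weight_def times_divide_eq_right
    using negbin_mono[of "M - m" M q] negbin_mono_order[of "Suc q" "p + q + 1" M] negbin_pos
    by (intro frac_le mult_left_mono) (auto simp: less_imp_le)
  then show "\<forall>\<^sub>F M in sequentially. norm (negbin_weight p q M m) \<le> negbin p m * (negbin q M / negbin (Suc q) M)"
    using negbin_weight_nonneg by (intro always_eventually) simp
qed

lemma negbin_weighted_average_null:
  "g \<longlonglongrightarrow> 0 \<Longrightarrow> (\<lambda>M. \<Sum>m\<le>M. negbin_weight p q M m * g m) \<longlonglongrightarrow> 0"
  by (rule weighted_average_null) (simp_all add: negbin_weight_nonneg sum_negbin_weight tendsto_negbin_weight)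

lemma negbin_weighted_product_limit:
  assumes x: "x \<longlonglongrightarrow> A" and y: "y \<longlonglongrightarrow> B"
  shows "(\<lambda>M. \<Sum>m\<le>M. negbin_weight p q M m * (x m * y (M - m))) \<longlonglongrightarrow> A * B"
proof -
  obtain C where C: "C > 0" "\<And>n. norm (y n) \<le> C"
    using convergent_imp_Bseq[OF convergentI[OF y]] by (auto elim: BseqE)
  have split: "(\<Sum>m\<le>M. negbin_weight p q M m * (x m * y (M - m))) - A * B
      = (\<Sum>m\<le>M. negbin_weight p q M m * ((x m - A) * y (M - m)))
        + A * (\<Sum>m\<le>M. negbin_weight q p M m * (y m - B))" for M
  proof -
    have "A * B = (\<Sum>m\<le>M. negbin_weight p q M m * (A * B))"
      by (simp add: sum_distrib_right[symmetric] sum_negbin_weight)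
    moreover have "(\<Sum>m\<le>M. negbin_weight q p M m * (y m - B)) = (\<Sum>m\<le>M. negbin_weight p q M m * (y (M - m) - B))"
      by (rule sum_negbin_weight_flip[symmetric])
    ultimately show ?thesis
      by (simp add: sum_distrib_left sum_subtractf[symmetric] sum.distrib[symmetric] algebra_simps)
  qed
  have first: "(\<lambda>M. \<Sum>m\<le>M. negbin_weight p q M m * ((x m - A) * y (M - m))) \<longlonglongrightarrow> 0"
  proof (rule Lim_null_comparison)
    show "(\<lambda>M. C * (\<Sum>m\<le>M. negbin_weight p q M m * \<bar>x m - A\<bar>)) \<longlonglongrightarrow> 0"
      using x by (intro tendsto_mult_right_zero negbin_weighted_average_null tendsto_rabs_zero) (rule LIM_zero)
    have termwise: "\<bar>negbin_weight p q M m * ((x m - A) * y (M - m))\<bar> \<le> C * (negbin_weight p q M m * \<bar>x m - A\<bar>)" for M m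
    proof -
      have "(negbin_weight p q M m * \<bar>x m - A\<bar>) * \<bar>y (M - m)\<bar> \<le> (negbin_weight p q M m * \<bar>x m - A\<bar>) * C"
        using C(2) negbin_weight_nonneg by (intro mult_left_mono) auto
      then show ?thesis by (simp add: abs_mult mult_ac negbin_weight_nonneg)
    qed
    have "\<bar>\<Sum>m\<le>M. negbin_weight p q M m * ((x m - A) * y (M - m))\<bar> \<le> C * (\<Sum>m\<le>M. negbin_weight p q M m * \<bar>x m - A\<bar>)" for M
      unfolding sum_distrib_left by (intro order_trans[OF sum_abs] sum_mono termwise)
    then show "\<forall>\<^sub>F M in sequentially. norm (\<Sum>m\<le>M. negbin_weight p q M m * ((x m - A) * y (M - m)))
        \<le> C * (\<Sum>m\<le>M. negbin_weight p q M m * \<bar>x m - A\<bar>)"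
      by (intro always_eventually) simp
  qed
  have second: "(\<lambda>M. A * (\<Sum>m\<le>M. negbin_weight q p M m * (y m - B))) \<longlonglongrightarrow> 0"
    using y by (intro tendsto_mult_right_zero negbin_weighted_average_null) (rule LIM_zero)
  have "(\<lambda>M. (\<Sum>m\<le>M. negbin_weight p q M m * (x m * y (M - m))) - A * B) \<longlonglongrightarrow> 0"
    unfolding split using tendsto_add[OF first second] by simp
  then show ?thesis by (rule LIM_zero_cancel)
qed

(* Since negbin e n ~ n^e / e!, growth_limit R e s L says s n ~ L n^e R^n / e!. *)
definition growth_limit :: "real \<Rightarrow> nat \<Rightarrow> (nat \<Rightarrow> real) \<Rightarrow> real \<Rightarrow> bool" where
  "growth_limit R e s L \<longleftrightarrow> (\<lambda>n. s n / (negbin e n * R ^ n)) \<longlonglongrightarrow> L"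

lemma growth_limit_add:
  "growth_limit R e s L \<Longrightarrow> growth_limit R e t M \<Longrightarrow> growth_limit R e (\<lambda>n. s n + t n) (L + M)"
  unfolding growth_limit_def by (simp add: add_divide_distrib tendsto_add)

lemma growth_limit_zero: "growth_limit R e (\<lambda>n. 0) 0"
  unfolding growth_limit_def by simp

lemma growth_limit_cmult: "growth_limit R e s L \<Longrightarrow> growth_limit R e (\<lambda>n. c * s n) (c * L)"
  unfolding growth_limit_def by (simp add: tendsto_mult_left times_divide_eq_right[symmetric] del: times_divide_eq_right)

lemma growth_limit_sum:
  assumes "finite I" "\<And>i. i \<in> I \<Longrightarrow> growth_limit R e (s i) (L i)"
  shows "growth_limit R e (\<lambda>n. \<Sum>i\<in>I. s i n) (\<Sum>i\<in>I. L i)"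
  using assms by (induction I rule: finite_induct) (auto simp: growth_limit_def intro: growth_limit_add[unfolded growth_limit_def])

lemma growth_limit_unique: "growth_limit R e s L \<Longrightarrow> growth_limit R e s M \<Longrightarrow> L = M"
  unfolding growth_limit_def using LIMSEQ_unique by blast

lemma growth_limit_bound:
  assumes "R > 0" "growth_limit R e s L"
  obtains C where "C > 0" "\<And>n. \<bar>s n\<bar> \<le> C * negbin e n * R ^ n"
proof -
  obtain C where C: "C > 0" "\<And>n. norm (s n / (negbin e n * R ^ n)) \<le> C"
    using convergent_imp_Bseq[OF convergentI[OF assms(2)[unfolded growth_limit_def]]] by (auto elim: BseqE)
  have "\<bar>s n\<bar> \<le> C * negbin e n * R ^ n" for n
    using C(2)[of n] negbin_pos[of e n] \<open>R > 0\<close> by (simp add: abs_mult divide_le_eq mult_ac)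
  then show ?thesis using that C(1) by blast
qed

lemma growth_limit_pos_imp_ex_pos:
  assumes "growth_limit R e s L" "L > 0" "R > 0"
  shows "\<exists>n. s n > 0"
proof -
  have "eventually (\<lambda>n. s n / (negbin e n * R ^ n) > 0) sequentially"
    using assms(1)[unfolded growth_limit_def] assms(2) by (rule order_tendstoD)
  then obtain n where "s n / (negbin e n * R ^ n) > 0" by (auto simp: eventually_sequentially)
  moreover have "negbin e n * R ^ n > 0" using negbin_pos[of e n] \<open>R > 0\<close> by simp
  ultimately show ?thesis by (auto simp: zero_less_divide_iff)
qed

lemma growth_limit_squeeze:
  assumes "growth_limit R e t 0" "R > 0" "\<And>n. 0 \<le> s n" "\<And>n. s n \<le> t n"
  shows "growth_limit R e s 0"
  unfolding growth_limit_def
proof (rule tendsto_sandwich[OF _ _ tendsto_const assms(1)[unfolded growth_limit_def]])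
  show "\<forall>\<^sub>F n in sequentially. 0 \<le> s n / (negbin e n * R ^ n)"
    using assms negbin_pos by (intro always_eventually allI divide_nonneg_pos) auto
  show "\<forall>\<^sub>F n in sequentially. s n / (negbin e n * R ^ n) \<le> t n / (negbin e n * R ^ n)"
    using assms negbin_pos by (intro always_eventually allI divide_right_mono) (auto intro: less_imp_le)
qed

lemma growth_limit_times_Suc:
  "growth_limit R 0 s L \<Longrightarrow> growth_limit R 1 (\<lambda>n. (real n + 1) * s n) L"
  unfolding growth_limit_def by (simp add: negbin_1)

lemma growth_limit_div_Suc:
  assumes "growth_limit R (Suc e) s L"
  shows "growth_limit R e (\<lambda>n. s n / (real n + 1)) (L / (real e + 1))"
proof -
  have ratio: "negbin (Suc e) n / ((real n + 1) * negbin e n) = (real n + 1 + real e) / ((real e + 1) * (real n + 1))" for n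
  proof -
    have Suc_order: "negbin (Suc e) n = negbin e n * (real n + 1 + real e) / (real e + 1)"
      using negbin_Suc_order[of e n] by (simp add: field_simps)
    have "a * X / c / (b * a) = X / (c * b)" if "a \<noteq> 0" for a b c X :: real
      using that by simp
    then show ?thesis unfolding Suc_order by simp
  qed
  have "(\<lambda>n. (real n + 1 + real e) / ((real e + 1) * (real n + 1))) \<longlonglongrightarrow> inverse (real e + 1)"
    by real_asymp
  then have "(\<lambda>n. s n / (negbin (Suc e) n * R ^ n) * (negbin (Suc e) n / ((real n + 1) * negbin e n)))
      \<longlonglongrightarrow> L * inverse (real e + 1)"
    unfolding ratio by (intro tendsto_mult assms[unfolded growth_limit_def])
  then show ?thesis unfolding growth_limit_def by (simp add: field_simps)
qed

lemma growth_limit_div_Suc_zero: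
  assumes "growth_limit R e s L"
  shows "growth_limit R e (\<lambda>n. s n / (real n + 1)) 0"
proof -
  have "(\<lambda>n. 1 / (real n + 1)) \<longlonglongrightarrow> (0::real)" by real_asymp
  then have "(\<lambda>n. s n / (negbin e n * R ^ n) * (1 / (real n + 1))) \<longlonglongrightarrow> L * 0"
    by (intro tendsto_mult assms[unfolded growth_limit_def])
  then show ?thesis unfolding growth_limit_def by (simp add: field_simps)
qed

lemma tendsto_growth_ratio_zero:
  assumes R: "R > 0" and slower: "R < R' \<or> (R = R' \<and> e < e')"
  shows "(\<lambda>n. negbin e n * R ^ n / (negbin e' n * R' ^ n)) \<longlonglongrightarrow> 0"
proof (cases "R < R'")
  case True
  show ?thesis
  proof (rule Lim_null_comparison)
    show "(\<lambda>n. negbin e n * (R / R') ^ n) \<longlonglongrightarrow> 0"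
      by (rule summable_LIMSEQ_zero, rule summable_negbin_power) (use R True in auto)
    have "negbin e n * R ^ n / (negbin e' n * R' ^ n) \<le> negbin e n * (R / R') ^ n" for n
      using negbin_ge_1[of e' n] negbin_pos[of e n] R True
      by (simp add: power_divide divide_le_eq mult_le_cancel_left1 mult_ac)
    moreover have "R' > 0" using R True by simp
    ultimately show "\<forall>\<^sub>F n in sequentially. norm (negbin e n * R ^ n / (negbin e' n * R' ^ n)) \<le> negbin e n * (R / R') ^ n"
      using negbin_pos R by (intro always_eventually) (simp add: abs_mult abs_of_pos)
  qed
next
  case False
  then have "R' = R" "Suc e \<le> e'" using slower by auto
  show ?thesis
  proof (rule Lim_null_comparison[OF _ tendsto_negbin_ratio_order])
    have "negbin e n / negbin e' n \<le> negbin e n / negbin (Suc e) n" for n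
      using negbin_mono_order[OF \<open>Suc e \<le> e'\<close>, of n] negbin_pos[of e n] negbin_pos[of "Suc e" n]
      by (intro divide_left_mono) auto
    then show "\<forall>\<^sub>F n in sequentially. norm (negbin e n * R ^ n / (negbin e' n * R' ^ n)) \<le> negbin e n / negbin (Suc e) n"
      using \<open>R' = R\<close> R by (intro always_eventually) (simp add: abs_of_pos negbin_pos)
  qed
qed

lemma growth_limit_dominated:
  assumes "R > 0" "growth_limit R e s L" "R < R' \<or> (R = R' \<and> e < e')"
  shows "growth_limit R' e' s 0"
proof -
  have "(\<lambda>n. s n / (negbin e n * R ^ n) * (negbin e n * R ^ n / (negbin e' n * R' ^ n))) \<longlonglongrightarrow> L * 0"
    using assms(2)[unfolded growth_limit_def] tendsto_growth_ratio_zero[OF assms(1,3)] by (rule tendsto_mult)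
  then show ?thesis unfolding growth_limit_def using \<open>R > 0\<close> by simp
qed

definition delay :: "(nat \<Rightarrow> real) \<Rightarrow> nat \<Rightarrow> real" where
  "delay s n = (if n = 0 then 0 else s (n - 1))"

lemma growth_limit_delay:
  assumes "R > 0" "growth_limit R e s L"
  shows "growth_limit R e (delay s) (L / R)"
  unfolding growth_limit_def
proof (rule LIMSEQ_offset[where k = 1])
  have "(\<lambda>n. s n / (negbin e n * R ^ n) * (negbin e n / negbin e (Suc n)) / R) \<longlonglongrightarrow> L * 1 / R"
    using assms(2)[unfolded growth_limit_def] tendsto_negbin_ratio_Suc \<open>R > 0\<close> by (intro tendsto_intros) auto
  then show "(\<lambda>n. delay s (n + 1) / (negbin e (n + 1) * R ^ (n + 1))) \<longlonglongrightarrow> L / R"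
    using \<open>R > 0\<close> by (simp add: delay_def field_simps)
qed

definition conv :: "(nat \<Rightarrow> real) \<Rightarrow> (nat \<Rightarrow> real) \<Rightarrow> nat \<Rightarrow> real" where
  "conv a b n = (\<Sum>m\<le>n. a m * b (n - m))"

lemma conv_commute: "conv a b = conv b a"
  unfolding conv_def
  by (rule ext, subst sum.atLeastAtMost_rev[of _ 0, simplified atLeast0AtMost]) (simp add: mult.commute)

lemma growth_limit_conv_same_rate:
  assumes "R > 0" "growth_limit R p a A" "growth_limit R q b B"
  shows "growth_limit R (p + q + 1) (conv a b) (A * B)"
proof -
  define x where "x n = a n / (negbin p n * R ^ n)" for n
  define y where "y n = b n / (negbin q n * R ^ n)" for n
  have "conv a b M / (negbin (p + q + 1) M * R ^ M) = (\<Sum>m\<le>M. negbin_weight p q M m * (x m * y (M - m)))" for M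
    unfolding conv_def sum_divide_distrib
  proof (intro sum.cong refl)
    fix m assume "m \<in> {..M}"
    then have "R ^ M = R ^ m * R ^ (M - m)" by (simp flip: power_add)
    then show "a m * b (M - m) / (negbin (p + q + 1) M * R ^ M) = negbin_weight p q M m * (x m * y (M - m))"
      unfolding negbin_weight_def x_def y_def using \<open>R > 0\<close> by simp
  qed
  then show ?thesis
    using negbin_weighted_product_limit[of x A y B p q] assms(2,3)
    unfolding growth_limit_def x_def y_def by presburger
qed

lemma growth_limit_summable_majorant:
  assumes "\<beta> > 0" "\<beta> < \<alpha>" and "growth_limit \<beta> q b B"
  obtains M where "summable M" "\<And>k. \<bar>b k / \<alpha> ^ k\<bar> \<le> M k"
proof -
  obtain C where C: "C > 0" "\<And>n. \<bar>b n\<bar> \<le> C * negbin q n * \<beta> ^ n"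
    using growth_limit_bound[OF assms(1,3)] by blast
  show thesis
  proof
    show "summable (\<lambda>k. C * negbin q k * (\<beta> / \<alpha>) ^ k)"
      unfolding mult.assoc using assms(1,2) by (intro summable_mult summable_negbin_power) auto
    show "\<bar>b k / \<alpha> ^ k\<bar> \<le> C * negbin q k * (\<beta> / \<alpha>) ^ k" for k
      using C(2)[of k] assms(1,2) by (simp add: abs_divide power_divide divide_right_mono)
  qed
qed

lemma growth_limit_conv_faster:
  assumes \<beta>: "\<beta> > 0" "\<beta> < \<alpha>" and a: "growth_limit \<alpha> p a A" and b: "growth_limit \<beta> q b B"
  shows "summable (\<lambda>k. b k / \<alpha> ^ k)" "growth_limit \<alpha> p (conv a b) (A * (\<Sum>k. b k / \<alpha> ^ k))"
proof -
  have \<alpha>: "\<alpha> > 0" using \<beta> by simp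
  obtain Ca where Ca: "Ca > 0" "\<And>n. \<bar>a n\<bar> \<le> Ca * negbin p n * \<alpha> ^ n"
    using growth_limit_bound[OF \<alpha> a] by blast
  obtain majorant where summable_majorant: "summable majorant"
    and b_majorant: "\<And>k. \<bar>b k / \<alpha> ^ k\<bar> \<le> majorant k"
    using growth_limit_summable_majorant[OF \<beta> b] by blast
  show summable_b: "summable (\<lambda>k. b k / \<alpha> ^ k)"
    by (rule summable_comparison_test[OF _ summable_majorant]) (use b_majorant in auto)
  define f where "f k M = (if k \<le> M then b k / \<alpha> ^ k * (a (M - k) / (negbin p M * \<alpha> ^ (M - k))) else 0)" for k M
  have conv_as_series: "conv a b M / (negbin p M * \<alpha> ^ M) = (\<Sum>k. f k M)" for M
  proof -
    have "(\<Sum>k. f k M) = (\<Sum>k\<le>M. f k M)" by (rule suminf_finite) (auto simp: f_def)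
    also have "\<dots> = (\<Sum>k\<le>M. b k * a (M - k) / (negbin p M * \<alpha> ^ M))"
    proof (intro sum.cong refl)
      fix k assume "k \<in> {..M}"
      then have "\<alpha> ^ M = \<alpha> ^ k * \<alpha> ^ (M - k)" by (simp flip: power_add)
      then show "f k M = b k * a (M - k) / (negbin p M * \<alpha> ^ M)"
        using \<open>k \<in> {..M}\<close> \<alpha> by (simp add: f_def)
    qed
    also have "\<dots> = conv a b M / (negbin p M * \<alpha> ^ M)"
      by (simp add: conv_commute[of a b] conv_def sum_divide_distrib)
    finally show ?thesis by simp
  qed
  have f_limit: "(\<lambda>M. f k M) \<longlonglongrightarrow> b k / \<alpha> ^ k * A" for k
  proof (rule LIMSEQ_offset[where k = k])
    have "(\<lambda>n. b k / \<alpha> ^ k * ((a n / (negbin p n * \<alpha> ^ n)) * (negbin p n / negbin p (n + k))))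
        \<longlonglongrightarrow> b k / \<alpha> ^ k * (A * 1)"
      using a[unfolded growth_limit_def] tendsto_negbin_ratio_add by (intro tendsto_intros)
    then show "(\<lambda>n. f k (n + k)) \<longlonglongrightarrow> b k / \<alpha> ^ k * A"
      using \<alpha> by (simp add: f_def field_simps)
  qed
  have f_bound: "norm (f k M) \<le> Ca * majorant k" for k M
  proof (cases "k \<le> M")
    case True
    have "\<bar>a (M - k)\<bar> \<le> Ca * negbin p M * \<alpha> ^ (M - k)"
      using Ca negbin_mono[of "M - k" M p] \<alpha>
      by (intro order_trans[OF Ca(2)] mult_right_mono mult_left_mono) auto
    then have "\<bar>a (M - k) / (negbin p M * \<alpha> ^ (M - k))\<bar> \<le> Ca"
      using negbin_pos[of p M] \<alpha> by (simp add: abs_divide abs_mult divide_le_eq mult_ac)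
    then have "\<bar>b k / \<alpha> ^ k\<bar> * \<bar>a (M - k) / (negbin p M * \<alpha> ^ (M - k))\<bar> \<le> majorant k * Ca"
      using b_majorant[of k] order_trans[OF abs_ge_zero b_majorant[of k]] by (intro mult_mono) auto
    then show ?thesis using True by (simp add: f_def abs_mult mult.commute)
  next
    case False
    then show ?thesis using Ca(1) order_trans[OF abs_ge_zero b_majorant[of k]] by (simp add: f_def)
  qed
  have "(\<lambda>M. \<Sum>k. f k M) \<longlonglongrightarrow> (\<Sum>k. b k / \<alpha> ^ k * A)"
    using tannerys_theorem[where a = f and F = sequentially and M = "\<lambda>k. Ca * majorant k", OF f_limit]
      summable_mult[OF summable_majorant, of Ca] f_bound by (auto intro: always_eventually)
  moreover have "(\<Sum>k. b k / \<alpha> ^ k * A) = A * (\<Sum>k. b k / \<alpha> ^ k)"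
    using suminf_mult2[OF summable_b, of A] by (simp add: mult.commute)
  ultimately show "growth_limit \<alpha> p (conv a b) (A * (\<Sum>k. b k / \<alpha> ^ k))"
    unfolding growth_limit_def conv_as_series by simp
qed

lemma growth_limit_conv_slower:
  assumes "\<alpha> > 0" "\<alpha> < \<beta>" and "growth_limit \<alpha> p a A" "growth_limit \<beta> q b B"
  shows "summable (\<lambda>k. a k / \<beta> ^ k)" "growth_limit \<beta> q (conv a b) (B * (\<Sum>k. a k / \<beta> ^ k))"
  using growth_limit_conv_faster[OF assms(1,2,4,3)] by (simp_all add: conv_commute[of a b])

section \<open>Powers of an eventually positive matrix\<close>

lemma stochastic_average_bounds:
  fixes T x :: "nat \<Rightarrow> real"
  assumes B: "finite B" "B \<noteq> {}" and T_ge: "\<And>t. t \<in> B \<Longrightarrow> T t \<ge> \<epsilon>" "\<epsilon> \<ge> 0"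
    and T_sum: "(\<Sum>t\<in>B. T t) = 1"
  shows "(\<Sum>t\<in>B. T t * x t) \<le> Max (x ` B) - \<epsilon> * (Max (x ` B) - Min (x ` B))"
    and "(\<Sum>t\<in>B. T t * x t) \<ge> Min (x ` B) + \<epsilon> * (Max (x ` B) - Min (x ` B))"
proof -
  define mx mn where "mx = Max (x ` B)" and "mn = Min (x ` B)"
  have x_between: "mn \<le> x t" "x t \<le> mx" if "t \<in> B" for t
    unfolding mx_def mn_def using B that by auto
  obtain tmin tmax where t: "tmin \<in> B" "x tmin = mn" "tmax \<in> B" "x tmax = mx"
    unfolding mx_def mn_def using Min_in[of "x ` B"] Max_in[of "x ` B"] B by fastforce
  have T_nonneg: "T t \<ge> 0" if "t \<in> B" for t
    using T_ge(1)[OF that] T_ge(2) by linarith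
  have average: "(\<Sum>t\<in>B. T t * x t) = c + (\<Sum>t\<in>B. T t * (x t - c))" for c
    using T_sum by (simp add: algebra_simps sum.distrib sum_subtractf sum_distrib_left[symmetric])
  have "(\<Sum>t\<in>B. T t * (x t - mx)) \<le> T tmin * (x tmin - mx)"
    using x_between T_nonneg t B(1)
    by (subst sum.remove[OF B(1) t(1)]) (auto intro!: sum_nonpos mult_nonneg_nonpos)
  also have "\<dots> \<le> \<epsilon> * (mn - mx)"
    using x_between[OF t(1)] T_ge t by (simp add: mult_right_mono_neg)
  finally show "(\<Sum>t\<in>B. T t * x t) \<le> Max (x ` B) - \<epsilon> * (Max (x ` B) - Min (x ` B))"
    unfolding average[of mx] mx_def mn_def by (simp add: algebra_simps)
  have "\<epsilon> * (mx - mn) \<le> T tmax * (x tmax - mn)"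
    using x_between[OF t(3)] T_ge t by (simp add: mult_right_mono)
  also have "\<dots> \<le> (\<Sum>t\<in>B. T t * (x t - mn))"
    using x_between T_nonneg t B(1)
    by (subst sum.remove[OF B(1) t(3)]) (auto intro!: sum_nonneg)
  finally show "(\<Sum>t\<in>B. T t * x t) \<ge> Min (x ` B) + \<epsilon> * (Max (x ` B) - Min (x ` B))"
    unfolding average[of mn] mx_def mn_def by (simp add: algebra_simps)
qed

lemma stochastic_semigroup_Max_Min:
  fixes K :: "nat \<Rightarrow> nat \<Rightarrow> nat \<Rightarrow> real" and c :: "nat \<Rightarrow> nat \<Rightarrow> real"
  assumes fin: "finite B" and ne: "B \<noteq> {}"
    and K_sum: "\<And>r. r \<in> B \<Longrightarrow> (\<Sum>t\<in>B. K k r t) = 1"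
    and K_ge: "\<And>r t. r \<in> B \<Longrightarrow> t \<in> B \<Longrightarrow> \<epsilon> \<le> K k r t" and "\<epsilon> \<ge> 0"
    and c_step: "\<And>r. r \<in> B \<Longrightarrow> c (k + m) r = (\<Sum>t\<in>B. K k r t * c m t)"
  defines "osc \<equiv> Max (c m ` B) - Min (c m ` B)"
  shows "Max (c (k + m) ` B) \<le> Max (c m ` B) - \<epsilon> * osc"
    and "Min (c m ` B) + \<epsilon> * osc \<le> Min (c (k + m) ` B)"
proof -
  have "c (k + m) r \<le> Max (c m ` B) - \<epsilon> * osc \<and> Min (c m ` B) + \<epsilon> * osc \<le> c (k + m) r" if r: "r \<in> B" for r
    using stochastic_average_bounds[OF fin ne K_ge[OF r] \<open>\<epsilon> \<ge> 0\<close> K_sum[OF r], of "c m"] c_step[OF r]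
    unfolding osc_def by simp
  then show "Max (c (k + m) ` B) \<le> Max (c m ` B) - \<epsilon> * osc" "Min (c m ` B) + \<epsilon> * osc \<le> Min (c (k + m) ` B)"
    using fin ne by (simp_all add: Max_le_iff Min_ge_iff)
qed

lemma monotone_contracting_gap_limit:
  fixes u l :: "nat \<Rightarrow> real"
  assumes "decseq u" "incseq l" and l_le_u: "\<And>m. l m \<le> u m"
    and gap: "\<And>m. u (N + m) - l (N + m) \<le> \<theta> * (u m - l m)" and "\<theta> < 1"
  obtains L where "u \<longlonglongrightarrow> L" "l \<longlonglongrightarrow> L" "\<And>m. l m \<le> L"
proof -
  have bounded: "l m \<le> u m'" for m m'
    using incseqD[OF \<open>incseq l\<close>, of m "max m m'"] decseqD[OF \<open>decseq u\<close>, of m' "max m m'"] l_le_u[of "max m m'"]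
    by simp
  obtain L1 where L1: "u \<longlonglongrightarrow> L1"
    using decseq_convergent[OF \<open>decseq u\<close>, of "l 0"] bounded by blast
  obtain L0 where L0: "l \<longlonglongrightarrow> L0" "\<And>m. l m \<le> L0"
    using incseq_convergent[OF \<open>incseq l\<close>, of "u 0"] bounded by blast
  have "(\<lambda>m. u (N + m) - l (N + m)) \<longlonglongrightarrow> L1 - L0"
    using LIMSEQ_ignore_initial_segment[OF L1, of N] LIMSEQ_ignore_initial_segment[OF L0(1), of N]
    by (auto intro: tendsto_diff simp: add.commute)
  moreover have "(\<lambda>m. \<theta> * (u m - l m)) \<longlonglongrightarrow> \<theta> * (L1 - L0)"
    using L1 L0(1) by (intro tendsto_intros)
  ultimately have "L1 - L0 \<le> \<theta> * (L1 - L0)"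
    by (rule LIMSEQ_le) (use gap in auto)
  then have "(1 - \<theta>) * (L1 - L0) \<le> 0"
    by (simp add: algebra_simps)
  moreover have "L0 \<le> L1"
    by (rule LIMSEQ_le[OF L0(1) L1]) (use l_le_u in blast)
  ultimately have "L0 = L1"
    using \<open>\<theta> < 1\<close> by (simp add: mult_le_0_iff)
  then show thesis using that L1 L0 by blast
qed

lemma stochastic_semigroup_limit:
  fixes K :: "nat \<Rightarrow> nat \<Rightarrow> nat \<Rightarrow> real" and c :: "nat \<Rightarrow> nat \<Rightarrow> real"
  assumes fin: "finite B" and ne: "B \<noteq> {}"
    and K_nonneg: "\<And>k r t. r \<in> B \<Longrightarrow> t \<in> B \<Longrightarrow> K k r t \<ge> 0"
    and K_sum: "\<And>k r. r \<in> B \<Longrightarrow> (\<Sum>t\<in>B. K k r t) = 1"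
    and K_pos: "\<And>r t. r \<in> B \<Longrightarrow> t \<in> B \<Longrightarrow> K N r t > 0"
    and c_step: "\<And>k m r. r \<in> B \<Longrightarrow> c (k + m) r = (\<Sum>t\<in>B. K k r t * c m t)"
  obtains L where "\<And>r. r \<in> B \<Longrightarrow> (\<lambda>m. c m r) \<longlonglongrightarrow> L" and "\<And>m. Min (c m ` B) \<le> L"
proof -
  define mx mn where "mx m = Max (c m ` B)" and "mn m = Min (c m ` B)" for m
  have c_between: "mn m \<le> c m r" "c m r \<le> mx m" if "r \<in> B" for m r
    unfolding mx_def mn_def using fin that by auto
  note step = stochastic_semigroup_Max_Min[where K = K and c = c, OF fin ne K_sum _ _ c_step, folded mx_def mn_def]
  have "mx (Suc m) \<le> mx m" "mn m \<le> mn (Suc m)" for m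
    using step[where k = 1 and m = m and \<epsilon> = 0] K_nonneg by auto
  then have "decseq mx" "incseq mn" by (simp_all add: decseq_SucI incseq_SucI)
  define \<epsilon> where "\<epsilon> = Min ((\<lambda>(r, t). K N r t) ` (B \<times> B))"
  have \<epsilon>_le: "\<epsilon> \<le> K N r t" if "r \<in> B" "t \<in> B" for r t
    unfolding \<epsilon>_def using fin that by (intro Min_le) auto
  have "\<epsilon> \<in> (\<lambda>(r, t). K N r t) ` (B \<times> B)"
    unfolding \<epsilon>_def using fin ne by (intro Min_in) auto
  then have "\<epsilon> > 0" using K_pos by auto
  \<comment> \<open>Doeblin: every \<open>N\<close> steps shrink the oscillation by the factor \<open>1 - 2 \<epsilon>\<close>.\<close>
  have gap: "mx (N + m) - mn (N + m) \<le> (1 - 2 * \<epsilon>) * (mx m - mn m)" for m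
    using step[where k = N and m = m and \<epsilon> = \<epsilon>] \<epsilon>_le \<open>\<epsilon> > 0\<close> by (auto simp: algebra_simps)
  obtain r0 where "r0 \<in> B" using ne by blast
  then have mn_le_mx: "mn m \<le> mx m" for m using c_between order_trans by blast
  have "1 - 2 * \<epsilon> < 1" using \<open>\<epsilon> > 0\<close> by simp
  then obtain L where L: "mx \<longlonglongrightarrow> L" "mn \<longlonglongrightarrow> L" "\<And>m. mn m \<le> L"
    using monotone_contracting_gap_limit[OF \<open>decseq mx\<close> \<open>incseq mn\<close> mn_le_mx gap] by metis
  show thesis
  proof
    show "(\<lambda>m. c m r) \<longlonglongrightarrow> L" if "r \<in> B" for r
    proof (rule tendsto_sandwich[OF _ _ L(2,1)])
      show "\<forall>\<^sub>F m in sequentially. mn m \<le> c m r" "\<forall>\<^sub>F m in sequentially. c m r \<le> mx m"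
        using c_between[OF that] by (simp_all add: always_eventually)
    qed
    show "Min (c m ` B) \<le> L" for m
      using L(3) unfolding mn_def .
  qed
qed

lemma mpow_nonneg:
  assumes "\<And>r s. r \<in> B \<Longrightarrow> s \<in> B \<Longrightarrow> A r s \<ge> (0::real)" "r \<in> B"
  shows "mpow B A m r s \<ge> 0"
  using assms(2)
proof (induction m arbitrary: r)
  case (Suc m)
  then show ?case using assms(1) by (simp add: mmul_def sum_nonneg)
qed simp

lemma mpow_add:
  fixes A :: "nat \<Rightarrow> nat \<Rightarrow> real"
  assumes "finite B" "r \<in> B"
  shows "mpow B A (k + m) r s = (\<Sum>t\<in>B. mpow B A k r t * mpow B A m t s)"
  using assms(2)
proof (induction k arbitrary: r)
  case 0
  then show ?case using assms(1) by (simp add: if_distrib[of "\<lambda>x. x * _"] sum.delta cong: if_cong)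
next
  case (Suc k)
  have "mpow B A (Suc k + m) r s = (\<Sum>u\<in>B. A r u * (\<Sum>t\<in>B. mpow B A k u t * mpow B A m t s))"
    using Suc.IH by (simp add: mmul_def)
  also have "\<dots> = (\<Sum>t\<in>B. (\<Sum>u\<in>B. A r u * mpow B A k u t) * mpow B A m t s)"
    by (simp add: sum_distrib_left sum_distrib_right mult.assoc) (rule sum.swap)
  finally show ?case by (simp add: mmul_def)
qed

lemma mpow_eigenvector:
  fixes A :: "nat \<Rightarrow> nat \<Rightarrow> real"
  assumes "finite B" and eig: "\<And>r. r \<in> B \<Longrightarrow> mvec B A v r = \<rho> * v r" and "r \<in> B"
  shows "(\<Sum>s\<in>B. mpow B A m r s * v s) = \<rho> ^ m * v r"
  using assms(3)
proof (induction m arbitrary: r)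
  case 0
  then show ?case using assms(1) by (simp add: if_distrib[of "\<lambda>x. x * _"] sum.delta cong: if_cong)
next
  case (Suc m)
  have "(\<Sum>s\<in>B. mpow B A (Suc m) r s * v s) = (\<Sum>t\<in>B. A r t * (\<Sum>s\<in>B. mpow B A m t s * v s))"
    by (simp add: mmul_def sum_distrib_left sum_distrib_right mult.assoc) (rule sum.swap)
  also have "\<dots> = \<rho> ^ m * mvec B A v r"
    using Suc.IH by (simp add: mvec_def sum_distrib_left mult_ac)
  finally show ?case using eig[OF Suc.prems] by simp
qed

context
  fixes B :: "nat set" and A :: "nat \<Rightarrow> nat \<Rightarrow> real" and v :: "nat \<Rightarrow> real" and \<rho> :: real
  assumes fin: "finite B" and ne: "B \<noteq> {}"
    and A_nonneg: "\<And>r s. r \<in> B \<Longrightarrow> s \<in> B \<Longrightarrow> A r s \<ge> 0"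
    and ev_pos: "eventually_positive B A"
    and v_pos: "\<And>r. r \<in> B \<Longrightarrow> v r > 0"
    and v_eig: "\<And>r. r \<in> B \<Longrightarrow> mvec B A v r = \<rho> * v r"
begin

lemma eventually_positive_eigenvalue_pos: "\<rho> > 0"
proof -
  obtain N where N: "\<And>n r s. n \<ge> N \<Longrightarrow> r \<in> B \<Longrightarrow> s \<in> B \<Longrightarrow> mpow B A n r s > 0"
    using ev_pos unfolding eventually_positive_def by blast
  obtain r where r: "r \<in> B" using ne by blast
  have "0 < (\<Sum>s\<in>B. mpow B A (Suc N) r s * v s)"
    using N[of "Suc N" r] r v_pos by (intro sum_pos[OF fin ne]) auto
  then have "\<rho> \<noteq> 0" using mpow_eigenvector[OF fin v_eig r, of "Suc N"] by auto
  moreover have "\<rho> * v r \<ge> 0"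
    unfolding v_eig[OF r, symmetric] mvec_def using A_nonneg r v_pos
    by (intro sum_nonneg mult_nonneg_nonneg) (auto simp: less_imp_le)
  ultimately show ?thesis using v_pos[OF r] by (simp add: zero_le_mult_iff)
qed

lemma perron_frobenius_limit:
  assumes s: "s \<in> B"
  obtains L where "L > 0" "\<And>r. r \<in> B \<Longrightarrow> (\<lambda>m. mpow B A m r s / \<rho> ^ m) \<longlonglongrightarrow> L * v r / v s"
proof -
  have \<rho>: "\<rho> > 0" by (rule eventually_positive_eigenvalue_pos)
  obtain N where N: "\<And>r t. r \<in> B \<Longrightarrow> t \<in> B \<Longrightarrow> mpow B A N r t > 0"
    using ev_pos unfolding eventually_positive_def by blast
  \<comment> \<open>the Doob transform of \<open>A\<close> by \<open>v\<close>, a stochastic matrix\<close>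
  define K where "K k r t = mpow B A k r t * v t / (\<rho> ^ k * v r)" for k r t
  define c where "c m r = K m r s" for m r
  have v_nonzero: "v r \<noteq> 0" if "r \<in> B" for r using v_pos[OF that] by simp
  have K_nonneg: "K k r t \<ge> 0" if "r \<in> B" "t \<in> B" for k r t
    unfolding K_def using mpow_nonneg[where A = A and B = B, OF A_nonneg that(1)] v_pos that \<rho>
    by (intro divide_nonneg_pos mult_nonneg_nonneg mult_pos_pos) (auto simp: less_imp_le)
  have K_sum: "(\<Sum>t\<in>B. K k r t) = 1" if "r \<in> B" for k r
    unfolding K_def sum_divide_distrib[symmetric]
    using mpow_eigenvector[OF fin v_eig that, of k] \<rho> v_nonzero[OF that] by simp
  have c_step: "c (k + m) r = (\<Sum>t\<in>B. K k r t * c m t)" if "r \<in> B" for k m r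
    unfolding c_def K_def mpow_add[OF fin that] sum_distrib_right sum_divide_distrib
    using \<rho> v_nonzero by (intro sum.cong refl) (simp add: power_add mult_ac)
  have K_pos: "K N r t > 0" if "r \<in> B" "t \<in> B" for r t
    unfolding K_def using N[OF that] v_pos that \<rho> by simp
  obtain L where L_lim: "\<And>r. r \<in> B \<Longrightarrow> (\<lambda>m. c m r) \<longlonglongrightarrow> L" and L_ge: "\<And>m. Min (c m ` B) \<le> L"
    using stochastic_semigroup_limit[OF fin ne K_nonneg K_sum K_pos c_step] by metis
  have "Min (c N ` B) \<in> c N ` B" using fin ne by (intro Min_in) auto
  then have "L > 0" using L_ge[of N] K_pos s unfolding c_def by force
  moreover have "(\<lambda>m. mpow B A m r s / \<rho> ^ m) \<longlonglongrightarrow> L * v r / v s" if "r \<in> B" for r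
  proof -
    have "(\<lambda>m. c m r * v r / v s) \<longlonglongrightarrow> L * v r / v s"
      using L_lim[OF that] v_nonzero[OF s] by (intro tendsto_intros)
    then show ?thesis using v_nonzero[OF that] v_nonzero[OF s] by (simp add: c_def K_def)
  qed
  ultimately show ?thesis using that by blast
qed

end

section \<open>Survival and occupation of the absorbed chain\<close>

context
  fixes d :: nat and R :: "nat \<Rightarrow> real" and Q :: "nat \<Rightarrow> nat \<Rightarrow> real" and L :: "nat set"
begin

text \<open>For the chain started in \<open>r\<close>: \<open>survival n r = P(T > n)\<close> and
  \<open>occupation n r = E(#{m \<le> n. X\<^sub>m \<in> L}; T > n)\<close>.\<close>

fun survival :: "nat \<Rightarrow> nat \<Rightarrow> real" where
  "survival 0 r = 1"
| "survival (Suc n) r = (\<Sum>s\<in>{1..d}. Q r s * survival n s)"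

fun occupation :: "nat \<Rightarrow> nat \<Rightarrow> real" where
  "occupation 0 r = of_bool (r \<in> L)"
| "occupation (Suc n) r = (\<Sum>s\<in>{1..d}. Q r s * occupation n s) + of_bool (r \<in> L) * survival (Suc n) r"

definition trajectory_weight :: "nat list \<Rightarrow> real" where
  "trajectory_weight xs = (\<Prod>i<length xs - 1. Pmat R Q (xs ! i) (xs ! Suc i))"

definition visits :: "nat \<Rightarrow> nat list \<Rightarrow> nat" where
  "visits n xs = card {m. m \<le> n \<and> xs ! m \<in> L}"

lemma surv_paths_0: "surv_paths d 0 = (\<lambda>r. [r]) ` {1..d}"
  unfolding surv_paths_def by (auto simp: length_Suc_conv)

lemma surv_paths_Suc: "surv_paths d (Suc n) = (\<lambda>(r, ys). r # ys) ` ({1..d} \<times> surv_paths d n)"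
proof (rule set_eqI)
  fix xs
  show "xs \<in> surv_paths d (Suc n) \<longleftrightarrow> xs \<in> (\<lambda>(r, ys). r # ys) ` ({1..d} \<times> surv_paths d n)"
  proof
    assume xs: "xs \<in> surv_paths d (Suc n)"
    then obtain r ys where "xs = r # ys" unfolding surv_paths_def by (cases xs) auto
    moreover have "r \<in> {1..d}" "ys \<in> surv_paths d n"
      using xs \<open>xs = r # ys\<close> unfolding surv_paths_def by (auto dest: spec[of _ 0] spec[of _ "Suc _"])
    ultimately show "xs \<in> (\<lambda>(r, ys). r # ys) ` ({1..d} \<times> surv_paths d n)" by auto
  next
    assume "xs \<in> (\<lambda>(r, ys). r # ys) ` ({1..d} \<times> surv_paths d n)"
    then show "xs \<in> surv_paths d (Suc n)"
      unfolding surv_paths_def by (auto simp: nth_Cons split: nat.split)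
  qed
qed

lemma surv_paths_hd: "xs \<in> surv_paths d n \<Longrightarrow> xs \<noteq> [] \<and> hd xs \<in> {1..d}"
  unfolding surv_paths_def by (cases xs) (auto dest: spec[of _ 0])

lemma trajectory_weight_Cons:
  assumes "ys \<noteq> []" "r \<noteq> 0" "hd ys \<noteq> 0"
  shows "trajectory_weight (r # ys) = Q r (hd ys) * trajectory_weight ys"
proof -
  have "trajectory_weight (r # ys) = (\<Prod>i<Suc (length ys - 1). Pmat R Q ((r # ys) ! i) ((r # ys) ! Suc i))"
    unfolding trajectory_weight_def using assms(1) by simp
  also have "\<dots> = Pmat R Q r (ys ! 0) * (\<Prod>i<length ys - 1. Pmat R Q (ys ! i) (ys ! Suc i))"
    by (subst prod.lessThan_Suc_shift) simp
  finally show ?thesis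
    unfolding trajectory_weight_def using assms by (simp add: Pmat_def hd_conv_nth)
qed

lemma visits_Cons: "visits (Suc n) (r # ys) = of_bool (r \<in> L) + visits n ys"
proof -
  have "{m. m \<le> Suc n \<and> (r # ys) ! m \<in> L} = (if r \<in> L then {0} else {}) \<union> Suc ` {m. m \<le> n \<and> ys ! m \<in> L}"
    by (rule set_eqI) (case_tac x; auto)
  then show ?thesis unfolding visits_def by (simp add: card_image)
qed

lemma sum_surv_paths_survival:
  "(\<Sum>xs\<in>surv_paths d n. c (hd xs) * trajectory_weight xs) = (\<Sum>r\<in>{1..d}. c r * survival n r)"
proof (induction n arbitrary: c)
  case 0
  show ?case by (simp add: surv_paths_0 sum.reindex inj_on_def trajectory_weight_def)
next
  case (Suc n)
  have inj: "inj_on (\<lambda>(r, ys). r # ys) ({1..d} \<times> surv_paths d n)" by (auto simp: inj_on_def)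
  have "(\<Sum>xs\<in>surv_paths d (Suc n). c (hd xs) * trajectory_weight xs)
      = (\<Sum>(r, ys)\<in>{1..d} \<times> surv_paths d n. c r * trajectory_weight (r # ys))"
    unfolding surv_paths_Suc sum.reindex[OF inj] by (simp add: case_prod_beta)
  also have "\<dots> = (\<Sum>r\<in>{1..d}. \<Sum>ys\<in>surv_paths d n. c r * (Q r (hd ys) * trajectory_weight ys))"
    unfolding sum.cartesian_product[symmetric]
    by (intro sum.cong refl, subst trajectory_weight_Cons) (auto dest: surv_paths_hd)
  also have "\<dots> = (\<Sum>ys\<in>surv_paths d n. (\<Sum>r\<in>{1..d}. c r * Q r (hd ys)) * trajectory_weight ys)"
    by (subst sum.swap) (simp add: sum_distrib_right mult.assoc)
  also have "\<dots> = (\<Sum>s\<in>{1..d}. (\<Sum>r\<in>{1..d}. c r * Q r s) * survival n s)" by (rule Suc.IH)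
  also have "\<dots> = (\<Sum>r\<in>{1..d}. c r * survival (Suc n) r)"
    by (simp add: sum_distrib_right sum_distrib_left mult.assoc) (rule sum.swap)
  finally show ?case .
qed

lemma sum_surv_paths_occupation:
  "(\<Sum>xs\<in>surv_paths d n. c (hd xs) * trajectory_weight xs * real (visits n xs)) = (\<Sum>r\<in>{1..d}. c r * occupation n r)"
proof (induction n arbitrary: c)
  case 0
  have "visits 0 [r] = of_bool (r \<in> L)" for r
    unfolding visits_def by (simp add: Collect_conv_if)
  then show ?case by (simp add: surv_paths_0 sum.reindex inj_on_def trajectory_weight_def)
next
  case (Suc n)
  have inj: "inj_on (\<lambda>(r, ys). r # ys) ({1..d} \<times> surv_paths d n)" by (auto simp: inj_on_def)
  have "(\<Sum>xs\<in>surv_paths d (Suc n). c (hd xs) * trajectory_weight xs * real (visits (Suc n) xs))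
      = (\<Sum>(r, ys)\<in>{1..d} \<times> surv_paths d n. c r * trajectory_weight (r # ys) * real (visits (Suc n) (r # ys)))"
    unfolding surv_paths_Suc sum.reindex[OF inj] by (simp add: case_prod_beta)
  also have "\<dots> = (\<Sum>r\<in>{1..d}. \<Sum>ys\<in>surv_paths d n.
        c r * of_bool (r \<in> L) * (Q r (hd ys) * trajectory_weight ys)
        + c r * Q r (hd ys) * trajectory_weight ys * real (visits n ys))"
    unfolding sum.cartesian_product[symmetric]
    by (intro sum.cong refl, subst trajectory_weight_Cons) (auto dest: surv_paths_hd simp: visits_Cons algebra_simps)
  also have "\<dots> = (\<Sum>r\<in>{1..d}. c r * of_bool (r \<in> L) * (\<Sum>ys\<in>surv_paths d n. Q r (hd ys) * trajectory_weight ys))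
       + (\<Sum>ys\<in>surv_paths d n. (\<Sum>r\<in>{1..d}. c r * Q r (hd ys)) * trajectory_weight ys * real (visits n ys))"
    by (simp add: sum.distrib sum_distrib_left sum_distrib_right mult.assoc) (subst sum.swap, simp add: mult.assoc)
  also have "\<dots> = (\<Sum>r\<in>{1..d}. c r * of_bool (r \<in> L) * survival (Suc n) r)
       + (\<Sum>s\<in>{1..d}. (\<Sum>r\<in>{1..d}. c r * Q r s) * occupation n s)"
    using sum_surv_paths_survival Suc.IH by simp
  also have "\<dots> = (\<Sum>r\<in>{1..d}. c r * occupation (Suc n) r)"
    by (simp add: sum.distrib distrib_left sum_distrib_left sum_distrib_right mult_ac) (rule sum.swap)
  finally show ?case .
qed

lemma cond_occupation_eq:
  "cond_occupation d \<pi> R Q L n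
    = (\<Sum>r\<in>{1..d}. \<pi> r * occupation n r) / (real n + 1) / (\<Sum>r\<in>{1..d}. \<pi> r * survival n r)"
proof -
  have "path_prob \<pi> (Pmat R Q) xs = \<pi> (hd xs) * trajectory_weight xs" for xs
    unfolding path_prob_def trajectory_weight_def by simp
  then show ?thesis
    unfolding cond_occupation_def visits_def[symmetric] sum_surv_paths_survival[symmetric]
      sum_surv_paths_occupation[symmetric]
    by (simp add: sum_divide_distrib add.commute)
qed

end

section \<open>Block itineraries\<close>

definition block_end :: "(nat \<Rightarrow> nat) \<Rightarrow> nat \<Rightarrow> nat" where
  "block_end ds j = (\<Sum>i\<in>{1..j}. ds i)"

lemma block_end_Suc: "block_end ds (Suc j) = block_end ds j + ds (Suc j)"
  unfolding block_end_def by simp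

lemma block_end_mono: "i \<le> j \<Longrightarrow> block_end ds i \<le> block_end ds j"
  unfolding block_end_def by (intro sum_mono2) auto

lemma blk_eq_block_end: "j \<ge> 1 \<Longrightarrow> blk ds j = {block_end ds (j - 1) + 1 .. block_end ds j}"
proof -
  assume "j \<ge> 1"
  then have "{1..<j} = {1..j - 1}" by auto
  then show ?thesis unfolding blk_def block_end_def by simp
qed

locale frobenius_blocks =
  fixes d k :: nat and ds :: "nat \<Rightarrow> nat" and Q :: "nat \<Rightarrow> nat \<Rightarrow> real"
    and \<rho> :: "nat \<Rightarrow> real" and v :: "nat \<Rightarrow> nat \<Rightarrow> real"
  assumes blocks_d: "d = (\<Sum>i\<in>{1..k}. ds i)" and blocks_pos: "\<forall>i\<in>{1..k}. ds i > 0"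
    and Q_nonneg: "\<forall>i\<in>{1..d}. \<forall>j\<in>{1..d}. Q i j \<ge> 0"
    and lower: "\<forall>i\<in>{1..k}. \<forall>j\<in>{1..k}. j > i \<longrightarrow> (\<forall>r\<in>blk ds i. \<forall>s\<in>blk ds j. Q r s = 0)"
    and evpos: "\<forall>i\<in>{1..k}. eventually_positive (blk ds i) Q"
    and v_pos: "\<forall>i\<in>{1..k}. \<forall>r\<in>blk ds i. v i r > 0"
    and v_eig: "\<forall>i\<in>{1..k}. \<forall>r\<in>blk ds i. mvec (blk ds i) Q (v i) r = \<rho> i * v i r"
begin

abbreviation block :: "nat \<Rightarrow> nat set" where "block i \<equiv> blk ds i"

lemma d_eq_block_end: "d = block_end ds k" using blocks_d unfolding block_end_def by simp

lemma finite_block: "finite (block i)" unfolding blk_def by simp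

lemma block_subset: "i \<in> {1..k} \<Longrightarrow> block i \<subseteq> {1..d}"
  using blk_eq_block_end[of i ds] block_end_mono[of i k ds] d_eq_block_end by auto

lemma block_nonempty: "i \<in> {1..k} \<Longrightarrow> block i \<noteq> {}"
proof -
  assume i: "i \<in> {1..k}"
  then obtain j where j: "i = Suc j" by (cases i) auto
  have "ds i > 0" using blocks_pos i by blast
  then have "block_end ds (i - 1) + 1 \<le> block_end ds i" using j block_end_Suc[of ds j] by simp
  then show ?thesis using blk_eq_block_end[of i ds] i by auto
qed

lemma block_disjoint: "i \<in> {1..k} \<Longrightarrow> j \<in> {1..k} \<Longrightarrow> i \<noteq> j \<Longrightarrow> block i \<inter> block j = {}"
proof -
  have aux: "block i \<inter> block j = {}" if "i \<in> {1..k}" "j \<in> {1..k}" "i < j" for i j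
  proof -
    have "block_end ds i \<le> block_end ds (j - 1)" using that by (intro block_end_mono) auto
    then show ?thesis using blk_eq_block_end[of i ds] blk_eq_block_end[of j ds] that by auto
  qed
  assume "i \<in> {1..k}" "j \<in> {1..k}" "i \<noteq> j"
  then show ?thesis using aux[of i j] aux[of j i] by (cases "i < j") auto
qed

lemma block_cover: "r \<in> {1..d} \<Longrightarrow> \<exists>i\<in>{1..k}. r \<in> block i"
proof -
  assume r: "r \<in> {1..d}"
  define i where "i = (LEAST i. r \<le> block_end ds i)"
  have ex: "r \<le> block_end ds k" using r d_eq_block_end by simp
  then have ri: "r \<le> block_end ds i" unfolding i_def by (rule LeastI)
  have ik: "i \<le> k" unfolding i_def using ex by (rule Least_le)
  have i0: "i \<noteq> 0"
  proof
    assume "i = 0"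
    then show False using ri r by (simp add: block_end_def)
  qed
  have "\<not> r \<le> block_end ds (i - 1)" unfolding i_def
    using i0 not_less_Least[of "i - 1" "\<lambda>i. r \<le> block_end ds i"] unfolding i_def[symmetric] by simp
  then have "r \<in> block i" using blk_eq_block_end[of i ds] i0 ri by auto
  then show ?thesis using i0 ik by auto
qed

lemma UN_blocks: "{1..d} = (\<Union>i\<in>{1..k}. block i)"
  using block_cover block_subset by blast

lemma Q_nonneg_blocks: "i \<in> {1..k} \<Longrightarrow> j \<in> {1..k} \<Longrightarrow> r \<in> block i \<Longrightarrow> s \<in> block j \<Longrightarrow> Q r s \<ge> 0"
  using Q_nonneg block_subset by blast

lemma row_sum_lower_blocks:
  assumes i: "i \<in> {1..k}" and r: "r \<in> block i"
  shows "(\<Sum>s\<in>{1..d}. Q r s * x s) = (\<Sum>s\<in>block i. Q r s * x s) + (\<Sum>j\<in>{1..<i}. \<Sum>s\<in>block j. Q r s * x s)"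
proof -
  have "(\<Sum>s\<in>{1..d}. Q r s * x s) = (\<Sum>j\<in>{1..k}. \<Sum>s\<in>block j. Q r s * x s)"
    unfolding UN_blocks
  proof (rule sum.UNION_disjoint)
    show "\<forall>i\<in>{1..k}. \<forall>j\<in>{1..k}. i \<noteq> j \<longrightarrow> block i \<inter> block j = {}" using block_disjoint by blast
  qed (auto simp: finite_block)
  also have "\<dots> = (\<Sum>j\<in>{1..i}. \<Sum>s\<in>block j. Q r s * x s)"
  proof (rule sum.mono_neutral_right)
    show "\<forall>j\<in>{1..k} - {1..i}. (\<Sum>s\<in>block j. Q r s * x s) = 0"
    proof
      fix j assume j: "j \<in> {1..k} - {1..i}"
      then have "j \<in> {1..k}" "i < j" by auto
      then have "\<forall>s\<in>block j. Q r s = 0" using lower i r by blast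
      then show "(\<Sum>s\<in>block j. Q r s * x s) = 0" by simp
    qed
  qed (use i in auto)
  also have "\<dots> = (\<Sum>s\<in>block i. Q r s * x s) + (\<Sum>j\<in>{1..<i}. \<Sum>s\<in>block j. Q r s * x s)"
  proof -
    have "{1..i} = insert i {1..<i}" using i by auto
    then show ?thesis by simp
  qed
  finally show ?thesis .
qed

(* Trajectories from r that stay m steps in block b, jump from s \<in> I_b to t \<in> I_c and then
   continue as described by g; h m weights the sojourn in b. *)
definition link_conv :: "(nat \<Rightarrow> real) \<Rightarrow> nat \<Rightarrow> nat \<Rightarrow> (nat \<Rightarrow> nat \<Rightarrow> real) \<Rightarrow> nat \<Rightarrow> nat \<Rightarrow> real" where
  "link_conv h b c g n r = (\<Sum>m<n. \<Sum>s\<in>block b. \<Sum>t\<in>block c. h m * mpow (block b) Q m r s * Q s t * g (n - 1 - m) t)"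

(* The part of survival n r, resp. of the occupation of I_l, due to trajectories whose
   itinerary of blocks is \<sigma>; the weight m + 1 counts the visits to b = l. *)
fun path_surv :: "nat list \<Rightarrow> nat \<Rightarrow> nat \<Rightarrow> real" where
  "path_surv [] n r = 0"
| "path_surv [b] n r = (\<Sum>s\<in>block b. mpow (block b) Q n r s)"
| "path_surv (b # c # \<sigma>) n r = link_conv (\<lambda>_. 1) b c (path_surv (c # \<sigma>)) n r"

fun path_occ :: "nat \<Rightarrow> nat list \<Rightarrow> nat \<Rightarrow> nat \<Rightarrow> real" where
  "path_occ l [] n r = 0"
| "path_occ l [b] n r = (if b = l then (real n + 1) * path_surv [b] n r else 0)"
| "path_occ l (b # c # \<sigma>) n r = link_conv (\<lambda>_. 1) b c (path_occ l (c # \<sigma>)) n r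
      + (if b = l then link_conv (\<lambda>m. real m + 1) b c (path_surv (c # \<sigma>)) n r else 0)"

lemma link_conv_0 [simp]: "link_conv h b c g 0 r = 0"
  unfolding link_conv_def by simp

lemma link_conv_Suc:
  assumes r: "r \<in> block b"
  shows "link_conv h b c g (Suc n) r = h 0 * (\<Sum>t\<in>block c. Q r t * g n t) + (\<Sum>x\<in>block b. Q r x * link_conv (\<lambda>m. h (Suc m)) b c g n x)"
proof -
  define T where "T m = (\<Sum>s\<in>block b. \<Sum>t\<in>block c. h m * mpow (block b) Q m r s * Q s t * g (Suc n - 1 - m) t)" for m
  have "link_conv h b c g (Suc n) r = T 0 + (\<Sum>m<n. T (Suc m))"
    unfolding link_conv_def T_def by (rule sum.lessThan_Suc_shift)
  also have "T 0 = h 0 * (\<Sum>t\<in>block c. Q r t * g n t)"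
  proof -
    have "T 0 = (\<Sum>s\<in>block b. if s = r then (\<Sum>t\<in>block c. h 0 * Q r t * g n t) else 0)"
      unfolding T_def by (intro sum.cong refl) auto
    also have "\<dots> = (\<Sum>t\<in>block c. h 0 * Q r t * g n t)" using r finite_block by (simp add: sum.delta')
    finally show ?thesis by (simp add: sum_distrib_left mult.assoc)
  qed
  also have "(\<Sum>m<n. T (Suc m)) = (\<Sum>x\<in>block b. Q r x * link_conv (\<lambda>m. h (Suc m)) b c g n x)"
  proof -
    have "T (Suc m) = (\<Sum>x\<in>block b. Q r x * (\<Sum>s\<in>block b. \<Sum>t\<in>block c. h (Suc m) * mpow (block b) Q m x s * Q s t * g (n - 1 - m) t))" for m
    proof -
      have "T (Suc m) = (\<Sum>s\<in>block b. \<Sum>t\<in>block c. \<Sum>x\<in>block b. Q r x * (h (Suc m) * mpow (block b) Q m x s * Q s t * g (n - 1 - m) t))"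
        unfolding T_def by (simp add: mmul_def sum_distrib_left sum_distrib_right algebra_simps)
      also have "\<dots> = (\<Sum>x\<in>block b. \<Sum>s\<in>block b. \<Sum>t\<in>block c. Q r x * (h (Suc m) * mpow (block b) Q m x s * Q s t * g (n - 1 - m) t))"
        by (subst sum.swap, subst (2) sum.swap) (rule refl)
      finally show ?thesis by (simp add: sum_distrib_left)
    qed
    then have "(\<Sum>m<n. T (Suc m)) = (\<Sum>m<n. \<Sum>x\<in>block b. Q r x * (\<Sum>s\<in>block b. \<Sum>t\<in>block c. h (Suc m) * mpow (block b) Q m x s * Q s t * g (n - 1 - m) t))"
      by simp
    also have "\<dots> = (\<Sum>x\<in>block b. Q r x * link_conv (\<lambda>m. h (Suc m)) b c g n x)"
      unfolding link_conv_def by (subst sum.swap) (simp add: sum_distrib_left)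
    finally show ?thesis .
  qed
  finally show ?thesis .
qed

lemma link_conv_add: "link_conv (\<lambda>m. h1 m + h2 m) b c g n r = link_conv h1 b c g n r + link_conv h2 b c g n r"
  unfolding link_conv_def by (simp add: algebra_simps sum.distrib)

lemma path_surv_single_Suc:
  assumes "r \<in> block b"
  shows "path_surv [b] (Suc n) r = (\<Sum>x\<in>block b. Q r x * path_surv [b] n x)"
proof -
  have "path_surv [b] (Suc n) r = (\<Sum>s\<in>block b. \<Sum>x\<in>block b. Q r x * mpow (block b) Q n x s)"
    by (simp add: mmul_def)
  also have "\<dots> = (\<Sum>x\<in>block b. Q r x * path_surv [b] n x)"
    by (subst sum.swap) (simp add: sum_distrib_left)
  finally show ?thesis .
qed

lemma path_surv_Cons_Suc:
  assumes "r \<in> block b"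
  shows "path_surv (b # c # \<sigma>) (Suc n) r = (\<Sum>t\<in>block c. Q r t * path_surv (c # \<sigma>) n t) + (\<Sum>x\<in>block b. Q r x * path_surv (b # c # \<sigma>) n x)"
  using link_conv_Suc[OF assms, of "\<lambda>_. 1" c "path_surv (c # \<sigma>)" n] by simp

lemma path_occ_single_Suc:
  assumes "r \<in> block b"
  shows "path_occ l [b] (Suc n) r = (\<Sum>x\<in>block b. Q r x * path_occ l [b] n x) + (if b = l then path_surv [b] (Suc n) r else 0)"
proof (cases "b = l")
  case True
  have "path_occ l [b] (Suc n) r = (real n + 1) * path_surv [b] (Suc n) r + path_surv [b] (Suc n) r" using True by (simp add: algebra_simps)
  also have "(real n + 1) * path_surv [b] (Suc n) r = (\<Sum>x\<in>block b. Q r x * path_occ l [b] n x)"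
    using True path_surv_single_Suc[OF assms, of n] by (simp add: sum_distrib_left algebra_simps del: path_surv.simps)
  finally show ?thesis using True by simp
next
  case False then show ?thesis by simp
qed

lemma path_occ_Cons_Suc:
  assumes "r \<in> block b"
  shows "path_occ l (b # c # \<sigma>) (Suc n) r = (\<Sum>t\<in>block c. Q r t * path_occ l (c # \<sigma>) n t) + (\<Sum>x\<in>block b. Q r x * path_occ l (b # c # \<sigma>) n x)
     + (if b = l then path_surv (b # c # \<sigma>) (Suc n) r else 0)"
proof -
  have occ_step: "link_conv (\<lambda>_. 1) b c (path_occ l (c # \<sigma>)) (Suc n) r = (\<Sum>t\<in>block c. Q r t * path_occ l (c # \<sigma>) n t) + (\<Sum>x\<in>block b. Q r x * link_conv (\<lambda>_. 1) b c (path_occ l (c # \<sigma>)) n x)"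
    using link_conv_Suc[OF assms, of "\<lambda>_. 1" c "path_occ l (c # \<sigma>)" n] by simp
  have weighted_step: "link_conv (\<lambda>m. real m + 1) b c (path_surv (c # \<sigma>)) (Suc n) r = (\<Sum>t\<in>block c. Q r t * path_surv (c # \<sigma>) n t)
      + (\<Sum>x\<in>block b. Q r x * (link_conv (\<lambda>m. real m + 1) b c (path_surv (c # \<sigma>)) n x + link_conv (\<lambda>_. 1) b c (path_surv (c # \<sigma>)) n x))"
  proof -
    have shifted_weight: "(\<lambda>m. real (Suc m) + 1) = (\<lambda>m. (real m + 1) + 1)" by auto
    show ?thesis using link_conv_Suc[OF assms, of "\<lambda>m. real m + 1" c "path_surv (c # \<sigma>)" n]
      unfolding shifted_weight link_conv_add by simp
  qed
  show ?thesis
  proof (cases "b = l")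
    case True
    have "path_occ l (b # c # \<sigma>) (Suc n) r = link_conv (\<lambda>_. 1) b c (path_occ l (c # \<sigma>)) (Suc n) r + link_conv (\<lambda>m. real m + 1) b c (path_surv (c # \<sigma>)) (Suc n) r"
      using True by simp
    also have "\<dots> = (\<Sum>t\<in>block c. Q r t * path_occ l (c # \<sigma>) n t) + (\<Sum>x\<in>block b. Q r x * path_occ l (b # c # \<sigma>) n x)
       + ((\<Sum>t\<in>block c. Q r t * path_surv (c # \<sigma>) n t) + (\<Sum>x\<in>block b. Q r x * path_surv (b # c # \<sigma>) n x))"
      unfolding occ_step weighted_step using True by (simp add: sum.distrib distrib_left algebra_simps)
    also have "(\<Sum>t\<in>block c. Q r t * path_surv (c # \<sigma>) n t) + (\<Sum>x\<in>block b. Q r x * path_surv (b # c # \<sigma>) n x) = path_surv (b # c # \<sigma>) (Suc n) r"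
      using path_surv_Cons_Suc[OF assms] by simp
    finally show ?thesis using True by simp
  next
    case False
    then show ?thesis using occ_step by simp
  qed
qed

definition dec_paths :: "nat \<Rightarrow> nat list set" where
  "dec_paths i = {\<sigma>. \<sigma> \<noteq> [] \<and> hd \<sigma> = i \<and> sorted_wrt (>) \<sigma> \<and> set \<sigma> \<subseteq> {1..k}}"

lemma finite_dec_paths: "finite (dec_paths i)"
proof -
  have "dec_paths i \<subseteq> {xs. set xs \<subseteq> {1..k} \<and> length xs \<le> k}"
  proof
    fix \<sigma> assume "\<sigma> \<in> dec_paths i"
    then have s: "sorted_wrt (>) \<sigma>" "set \<sigma> \<subseteq> {1..k}" unfolding dec_paths_def by auto
    have "distinct \<sigma>" using s(1) by (induction \<sigma>) auto
    then have "length \<sigma> = card (set \<sigma>)" by (simp add: distinct_card)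
    also have "\<dots> \<le> card {1..k}" using s(2) by (intro card_mono) auto
    finally show "\<sigma> \<in> {xs. set xs \<subseteq> {1..k} \<and> length xs \<le> k}" using s(2) by simp
  qed
  moreover have "finite {xs. set xs \<subseteq> {1..k} \<and> length xs \<le> k}"
    by (rule finite_lists_length_le) simp
  ultimately show ?thesis by (rule finite_subset)
qed

lemma dec_paths_eq:
  assumes i: "i \<in> {1..k}"
  shows "dec_paths i = insert [i] (\<Union>j\<in>{1..<i}. (\<lambda>\<sigma>. i # \<sigma>) ` dec_paths j)"
proof (rule set_eqI)
  fix \<sigma>
  show "\<sigma> \<in> dec_paths i \<longleftrightarrow> \<sigma> \<in> insert [i] (\<Union>j\<in>{1..<i}. (\<lambda>\<sigma>. i # \<sigma>) ` dec_paths j)"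
  proof
    assume A: "\<sigma> \<in> dec_paths i"
    then obtain \<tau> where \<sigma>: "\<sigma> = i # \<tau>" unfolding dec_paths_def by (cases \<sigma>) auto
    show "\<sigma> \<in> insert [i] (\<Union>j\<in>{1..<i}. (\<lambda>\<sigma>. i # \<sigma>) ` dec_paths j)"
    proof (cases \<tau>)
      case Nil then show ?thesis using \<sigma> by simp
    next
      case (Cons j \<tau>')
      have "j \<in> {1..<i}" using A \<sigma> Cons unfolding dec_paths_def by auto
      moreover have "\<tau> \<in> dec_paths j" using A \<sigma> Cons unfolding dec_paths_def by auto
      ultimately show ?thesis using \<sigma> by auto
    qed
  next
    assume "\<sigma> \<in> insert [i] (\<Union>j\<in>{1..<i}. (\<lambda>\<sigma>. i # \<sigma>) ` dec_paths j)"
    then show "\<sigma> \<in> dec_paths i"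
    proof
      assume "\<sigma> = [i]" then show ?thesis using i unfolding dec_paths_def by auto
    next
      assume "\<sigma> \<in> (\<Union>j\<in>{1..<i}. (\<lambda>\<sigma>. i # \<sigma>) ` dec_paths j)"
      then obtain j \<tau> where j: "j \<in> {1..<i}" "\<tau> \<in> dec_paths j" "\<sigma> = i # \<tau>" by auto
      then obtain \<tau>' where \<tau>: "\<tau> = j # \<tau>'" unfolding dec_paths_def by (cases \<tau>) auto
      have "\<forall>x\<in>set \<tau>. x < i"
      proof
        fix x assume "x \<in> set \<tau>"
        then have "x = j \<or> x \<in> set \<tau>'" using \<tau> by auto
        moreover have "\<forall>y\<in>set \<tau>'. y < j" using j(2) \<tau> unfolding dec_paths_def by auto
        ultimately show "x < i" using j(1) by auto
      qed
      then show ?thesis using j i unfolding dec_paths_def by auto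
    qed
  qed
qed

lemma sum_dec_paths:
  assumes i: "i \<in> {1..k}"
  shows "(\<Sum>\<sigma>\<in>dec_paths i. f \<sigma>) = f [i] + (\<Sum>j\<in>{1..<i}. \<Sum>\<sigma>\<in>dec_paths j. f (i # \<sigma>))"
proof -
  have nin: "[i] \<notin> (\<Union>j\<in>{1..<i}. (\<lambda>\<sigma>. i # \<sigma>) ` dec_paths j)" unfolding dec_paths_def by auto
  have fin: "finite (\<Union>j\<in>{1..<i}. (\<lambda>\<sigma>. i # \<sigma>) ` dec_paths j)" using finite_dec_paths by auto
  have "(\<Sum>\<sigma>\<in>dec_paths i. f \<sigma>) = f [i] + (\<Sum>\<sigma>\<in>(\<Union>j\<in>{1..<i}. (\<lambda>\<sigma>. i # \<sigma>) ` dec_paths j). f \<sigma>)"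
    unfolding dec_paths_eq[OF i] using nin fin by simp
  also have "(\<Sum>\<sigma>\<in>(\<Union>j\<in>{1..<i}. (\<lambda>\<sigma>. i # \<sigma>) ` dec_paths j). f \<sigma>) = (\<Sum>j\<in>{1..<i}. \<Sum>\<sigma>\<in>(\<lambda>\<sigma>. i # \<sigma>) ` dec_paths j. f \<sigma>)"
  proof (rule sum.UNION_disjoint)
    show "\<forall>a\<in>{1..<i}. \<forall>b\<in>{1..<i}. a \<noteq> b \<longrightarrow> (\<lambda>\<sigma>. i # \<sigma>) ` dec_paths a \<inter> (\<lambda>\<sigma>. i # \<sigma>) ` dec_paths b = {}"
      unfolding dec_paths_def by auto
  qed (auto simp: finite_dec_paths)
  also have "\<dots> = (\<Sum>j\<in>{1..<i}. \<Sum>\<sigma>\<in>dec_paths j. f (i # \<sigma>))"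
    by (rule sum.cong[OF refl]) (subst sum.reindex, auto simp: inj_on_def)
  finally show ?thesis .
qed

lemma dec_paths_Cons: "\<sigma> \<in> dec_paths j \<Longrightarrow> \<exists>\<tau>. \<sigma> = j # \<tau>"
  unfolding dec_paths_def by (cases \<sigma>) auto

lemma sum_dec_paths_Suc:
  fixes X :: "nat list \<Rightarrow> nat \<Rightarrow> nat \<Rightarrow> real" and E :: "nat list \<Rightarrow> real"
  assumes i: "i \<in> {1..k}" and r: "r \<in> block i"
    and X1: "X [i] (Suc n) r = (\<Sum>x\<in>block i. Q r x * X [i] n x) + E [i]"
    and X2: "\<And>j \<tau>. j \<in> {1..<i} \<Longrightarrow> X (i # j # \<tau>) (Suc n) r =
        (\<Sum>t\<in>block j. Q r t * X (j # \<tau>) n t) + (\<Sum>x\<in>block i. Q r x * X (i # j # \<tau>) n x) + E (i # j # \<tau>)"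
  shows "(\<Sum>\<sigma>\<in>dec_paths i. X \<sigma> (Suc n) r) = (\<Sum>x\<in>block i. Q r x * (\<Sum>\<sigma>\<in>dec_paths i. X \<sigma> n x))
      + (\<Sum>j\<in>{1..<i}. \<Sum>t\<in>block j. Q r t * (\<Sum>\<sigma>\<in>dec_paths j. X \<sigma> n t)) + (\<Sum>\<sigma>\<in>dec_paths i. E \<sigma>)"
proof -
  have X2': "X (i # \<sigma>) (Suc n) r = (\<Sum>t\<in>block j. Q r t * X \<sigma> n t) + (\<Sum>x\<in>block i. Q r x * X (i # \<sigma>) n x) + E (i # \<sigma>)"
    if "j \<in> {1..<i}" "\<sigma> \<in> dec_paths j" for j \<sigma>
    using dec_paths_Cons[OF that(2)] X2[OF that(1)] by auto
  have "(\<Sum>\<sigma>\<in>dec_paths i. X \<sigma> (Suc n) r) = X [i] (Suc n) r + (\<Sum>j\<in>{1..<i}. \<Sum>\<sigma>\<in>dec_paths j. X (i # \<sigma>) (Suc n) r)"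
    by (rule sum_dec_paths[OF i])
  also have "\<dots> = ((\<Sum>x\<in>block i. Q r x * X [i] n x) + (\<Sum>j\<in>{1..<i}. \<Sum>\<sigma>\<in>dec_paths j. \<Sum>x\<in>block i. Q r x * X (i # \<sigma>) n x))
      + (\<Sum>j\<in>{1..<i}. \<Sum>\<sigma>\<in>dec_paths j. \<Sum>t\<in>block j. Q r t * X \<sigma> n t)
      + (E [i] + (\<Sum>j\<in>{1..<i}. \<Sum>\<sigma>\<in>dec_paths j. E (i # \<sigma>)))"
    unfolding X1 by (simp add: X2' sum.distrib)
  also have "(\<Sum>x\<in>block i. Q r x * X [i] n x) + (\<Sum>j\<in>{1..<i}. \<Sum>\<sigma>\<in>dec_paths j. \<Sum>x\<in>block i. Q r x * X (i # \<sigma>) n x)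
      = (\<Sum>x\<in>block i. Q r x * (\<Sum>\<sigma>\<in>dec_paths i. X \<sigma> n x))"
  proof -
    have "(\<Sum>j\<in>{1..<i}. \<Sum>\<sigma>\<in>dec_paths j. \<Sum>x\<in>block i. Q r x * X (i # \<sigma>) n x) = (\<Sum>x\<in>block i. Q r x * (\<Sum>j\<in>{1..<i}. \<Sum>\<sigma>\<in>dec_paths j. X (i # \<sigma>) n x))"
      by (simp add: sum_distrib_left) (subst sum.swap, rule sum.cong[OF refl], subst sum.swap, rule refl)
    then show ?thesis by (simp add: sum_dec_paths[OF i] distrib_left sum.distrib)
  qed
  also have "(\<Sum>j\<in>{1..<i}. \<Sum>\<sigma>\<in>dec_paths j. \<Sum>t\<in>block j. Q r t * X \<sigma> n t) = (\<Sum>j\<in>{1..<i}. \<Sum>t\<in>block j. Q r t * (\<Sum>\<sigma>\<in>dec_paths j. X \<sigma> n t))"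
    by (rule sum.cong[OF refl]) (simp add: sum_distrib_left, rule sum.swap)
  also have "E [i] + (\<Sum>j\<in>{1..<i}. \<Sum>\<sigma>\<in>dec_paths j. E (i # \<sigma>)) = (\<Sum>\<sigma>\<in>dec_paths i. E \<sigma>)"
    by (rule sum_dec_paths[OF i, symmetric])
  finally show ?thesis .
qed

lemma path_surv_single_0: "path_surv [b] 0 r = (if r \<in> block b then 1 else 0)"
  using finite_block by (simp add: sum.delta)

lemma survival_eq_sum_path_surv:
  assumes "i \<in> {1..k}" "r \<in> block i"
  shows "survival d Q n r = (\<Sum>\<sigma>\<in>dec_paths i. path_surv \<sigma> n r)"
  using assms
proof (induction n arbitrary: i r)
  case 0
  have "(\<Sum>\<sigma>\<in>dec_paths i. path_surv \<sigma> 0 r) = path_surv [i] 0 r + (\<Sum>j\<in>{1..<i}. \<Sum>\<sigma>\<in>dec_paths j. path_surv (i # \<sigma>) 0 r)"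
    by (rule sum_dec_paths[OF 0(1)])
  also have "(\<Sum>j\<in>{1..<i}. \<Sum>\<sigma>\<in>dec_paths j. path_surv (i # \<sigma>) 0 r) = 0"
  proof (intro sum.neutral ballI)
    fix j \<sigma> assume "\<sigma> \<in> dec_paths j"
    then obtain \<tau> where "\<sigma> = j # \<tau>" using dec_paths_Cons by blast
    then show "path_surv (i # \<sigma>) 0 r = 0" by simp
  qed
  finally show ?case using 0 path_surv_single_0 by simp
next
  case (Suc n)
  have "survival d Q (Suc n) r = (\<Sum>s\<in>block i. Q r s * survival d Q n s) + (\<Sum>j\<in>{1..<i}. \<Sum>s\<in>block j. Q r s * survival d Q n s)"
    using row_sum_lower_blocks[OF Suc.prems] by simp
  also have "\<dots> = (\<Sum>s\<in>block i. Q r s * (\<Sum>\<sigma>\<in>dec_paths i. path_surv \<sigma> n s)) + (\<Sum>j\<in>{1..<i}. \<Sum>s\<in>block j. Q r s * (\<Sum>\<sigma>\<in>dec_paths j. path_surv \<sigma> n s))"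
    using Suc.IH Suc.prems(1) by (intro arg_cong2[where f="(+)"] sum.cong refl) auto
  also have "\<dots> = (\<Sum>\<sigma>\<in>dec_paths i. path_surv \<sigma> (Suc n) r)"
    using sum_dec_paths_Suc[OF Suc.prems, of path_surv n "\<lambda>_. 0"] path_surv_single_Suc[OF Suc.prems(2), of n] path_surv_Cons_Suc[OF Suc.prems(2)]
    by simp
  finally show ?case .
qed

lemma occupation_eq_sum_path_occ:
  assumes "i \<in> {1..k}" "r \<in> block i" "l \<in> {1..k}"
  shows "occupation d Q (block l) n r = (\<Sum>\<sigma>\<in>dec_paths i. path_occ l \<sigma> n r)"
  using assms(1,2)
proof (induction n arbitrary: i r)
  case 0
  have "(\<Sum>\<sigma>\<in>dec_paths i. path_occ l \<sigma> 0 r) = path_occ l [i] 0 r + (\<Sum>j\<in>{1..<i}. \<Sum>\<sigma>\<in>dec_paths j. path_occ l (i # \<sigma>) 0 r)"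
    by (rule sum_dec_paths[OF 0(1)])
  also have "(\<Sum>j\<in>{1..<i}. \<Sum>\<sigma>\<in>dec_paths j. path_occ l (i # \<sigma>) 0 r) = 0"
  proof (intro sum.neutral ballI)
    fix j \<sigma> assume "\<sigma> \<in> dec_paths j"
    then obtain \<tau> where "\<sigma> = j # \<tau>" using dec_paths_Cons by blast
    then show "path_occ l (i # \<sigma>) 0 r = 0" by simp
  qed
  also have "path_occ l [i] 0 r = (if r \<in> block l then 1 else 0)"
  proof -
    have "r \<in> block l \<longleftrightarrow> i = l" using 0 assms(3) block_disjoint by blast
    then show ?thesis using 0 path_surv_single_0 by simp
  qed
  finally show ?case by simp
next
  case (Suc n)
  have il: "r \<in> block l \<longleftrightarrow> i = l" using Suc.prems assms(3) block_disjoint by blast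
  have "occupation d Q (block l) (Suc n) r = (\<Sum>s\<in>block i. Q r s * occupation d Q (block l) n s) + (\<Sum>j\<in>{1..<i}. \<Sum>s\<in>block j. Q r s * occupation d Q (block l) n s)
      + (if r \<in> block l then survival d Q (Suc n) r else 0)"
    using row_sum_lower_blocks[OF Suc.prems] by (simp del: survival.simps)
  also have "\<dots> = (\<Sum>s\<in>block i. Q r s * (\<Sum>\<sigma>\<in>dec_paths i. path_occ l \<sigma> n s)) + (\<Sum>j\<in>{1..<i}. \<Sum>s\<in>block j. Q r s * (\<Sum>\<sigma>\<in>dec_paths j. path_occ l \<sigma> n s))
      + (\<Sum>\<sigma>\<in>dec_paths i. if hd \<sigma> = l then path_surv \<sigma> (Suc n) r else 0)"
  proof -
    have "(\<Sum>\<sigma>\<in>dec_paths i. if hd \<sigma> = l then path_surv \<sigma> (Suc n) r else 0) = (if r \<in> block l then survival d Q (Suc n) r else 0)"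
    proof -
      have "(\<Sum>\<sigma>\<in>dec_paths i. if hd \<sigma> = l then path_surv \<sigma> (Suc n) r else 0) = (\<Sum>\<sigma>\<in>dec_paths i. if i = l then path_surv \<sigma> (Suc n) r else 0)"
        by (intro sum.cong refl) (auto simp: dec_paths_def)
      then show ?thesis using survival_eq_sum_path_surv[OF Suc.prems, of "Suc n"] il by (simp del: survival.simps)
    qed
    moreover have "(\<Sum>s\<in>block i. Q r s * occupation d Q (block l) n s) + (\<Sum>j\<in>{1..<i}. \<Sum>s\<in>block j. Q r s * occupation d Q (block l) n s)
      = (\<Sum>s\<in>block i. Q r s * (\<Sum>\<sigma>\<in>dec_paths i. path_occ l \<sigma> n s)) + (\<Sum>j\<in>{1..<i}. \<Sum>s\<in>block j. Q r s * (\<Sum>\<sigma>\<in>dec_paths j. path_occ l \<sigma> n s))"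
      using Suc.IH Suc.prems(1) by (intro arg_cong2[where f="(+)"] sum.cong refl) auto
    ultimately show ?thesis by simp
  qed
  also have "\<dots> = (\<Sum>\<sigma>\<in>dec_paths i. path_occ l \<sigma> (Suc n) r)"
    using sum_dec_paths_Suc[OF Suc.prems, of "path_occ l" n "\<lambda>\<sigma>. if hd \<sigma> = l then path_surv \<sigma> (Suc n) r else 0"]
      path_occ_single_Suc[OF Suc.prems(2), where n = n and l = l] path_occ_Cons_Suc[OF Suc.prems(2), where l = l]
    by (simp del: path_surv.simps path_occ.simps)
  finally show ?case .
qed

end

section \<open>Asymptotics of the itinerary contributions\<close>

definition poly_weight :: "nat \<Rightarrow> nat \<Rightarrow> real" where "poly_weight p m = (real m + 1) ^ p"

lemma poly_weight_0: "poly_weight 0 = (\<lambda>_. 1)" by (rule ext) (simp add: poly_weight_def)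
lemma poly_weight_pos: "poly_weight p m > 0" unfolding poly_weight_def by simp

lemma double_sum_pos:
  fixes q x :: "nat \<Rightarrow> nat \<Rightarrow> real"
  assumes "finite S" "finite T" "sa \<in> S" "ta \<in> T" "q sa ta > 0"
    and q_nonneg: "\<And>s t. s \<in> S \<Longrightarrow> t \<in> T \<Longrightarrow> q s t \<ge> 0"
    and x_pos: "\<And>s t. s \<in> S \<Longrightarrow> t \<in> T \<Longrightarrow> x s t > 0"
  shows "(\<Sum>s\<in>S. \<Sum>t\<in>T. q s t * x s t) > 0"
proof -
  have nonneg: "0 \<le> q s t * x s t" if "s \<in> S" "t \<in> T" for s t
    using q_nonneg[OF that] x_pos[OF that] by simp
  have "0 < (\<Sum>t\<in>T. q sa t * x sa t)"
    using assms nonneg by (intro sum_pos2[OF assms(2,4)]) auto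
  then show ?thesis
    using assms nonneg by (intro sum_pos2[OF assms(1,3)] sum_nonneg) auto
qed

context frobenius_blocks
begin

lemma block_perron_frobenius_hyps:
  assumes "b \<in> {1..k}"
  shows "eventually_positive (block b) Q" "\<And>r. r \<in> block b \<Longrightarrow> v b r > 0"
    "\<And>r. r \<in> block b \<Longrightarrow> mvec (block b) Q (v b) r = \<rho> b * v b r"
  using assms evpos v_pos v_eig by auto

lemma rho_pos: "b \<in> {1..k} \<Longrightarrow> \<rho> b > 0"
  by (rule eventually_positive_eigenvalue_pos[OF finite_block block_nonempty Q_nonneg_blocks block_perron_frobenius_hyps])

definition block_limit :: "nat \<Rightarrow> nat \<Rightarrow> nat \<Rightarrow> real" where
  "block_limit b r s = lim (\<lambda>m. mpow (block b) Q m r s / \<rho> b ^ m)"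

lemma
  assumes b: "b \<in> {1..k}" and r: "r \<in> block b" and s: "s \<in> block b"
  shows block_limit_pos: "block_limit b r s > 0"
    and tendsto_block_limit: "(\<lambda>m. mpow (block b) Q m r s / \<rho> b ^ m) \<longlonglongrightarrow> block_limit b r s"
proof -
  obtain L where L: "L > 0" "(\<lambda>m. mpow (block b) Q m r s / \<rho> b ^ m) \<longlonglongrightarrow> L * v b r / v b s"
    using perron_frobenius_limit[OF finite_block block_nonempty[OF b] Q_nonneg_blocks[OF b b]
        block_perron_frobenius_hyps[OF b] s] r by metis
  then have "block_limit b r s = L * v b r / v b s" unfolding block_limit_def by (intro limI)
  then show "block_limit b r s > 0" "(\<lambda>m. mpow (block b) Q m r s / \<rho> b ^ m) \<longlonglongrightarrow> block_limit b r s"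
    using L block_perron_frobenius_hyps(2)[OF b] r s by simp_all
qed

lemma growth_limit_block:
  assumes b: "b \<in> {1..k}" and r: "r \<in> block b" and s: "s \<in> block b" and p: "p \<le> 1"
  shows "growth_limit (\<rho> b) p (\<lambda>m. poly_weight p m * mpow (block b) Q m r s) (block_limit b r s)"
proof -
  have c0: "growth_limit (\<rho> b) 0 (\<lambda>m. mpow (block b) Q m r s) (block_limit b r s)"
    unfolding growth_limit_def using tendsto_block_limit[OF b r s] by simp
  show ?thesis
  proof (cases p)
    case 0 then show ?thesis using c0 by (simp add: poly_weight_def)
  next
    case (Suc p')
    then have "p = 1" using p by simp
    then show ?thesis using growth_limit_times_Suc[OF c0] by (simp add: poly_weight_def)
  qed
qed

lemma link_conv_eq_delay_conv:
  "link_conv h b c g n r = (\<Sum>s\<in>block b. \<Sum>t\<in>block c. Q s t * delay (conv (\<lambda>m. h m * mpow (block b) Q m r s) (\<lambda>j. g j t)) n)"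
proof (cases n)
  case 0 then show ?thesis by (simp add: delay_def)
next
  case (Suc n')
  have "link_conv h b c g n r = (\<Sum>m<Suc n'. \<Sum>s\<in>block b. \<Sum>t\<in>block c. Q s t * (h m * mpow (block b) Q m r s * g (n' - m) t))"
    unfolding link_conv_def Suc by (intro sum.cong refl) (simp add: algebra_simps)
  also have "\<dots> = (\<Sum>s\<in>block b. \<Sum>m<Suc n'. \<Sum>t\<in>block c. Q s t * (h m * mpow (block b) Q m r s * g (n' - m) t))"
    by (rule sum.swap)
  also have "\<dots> = (\<Sum>s\<in>block b. \<Sum>t\<in>block c. \<Sum>m<Suc n'. Q s t * (h m * mpow (block b) Q m r s * g (n' - m) t))"
    by (rule sum.cong[OF refl]) (rule sum.swap)
  also have "\<dots> = (\<Sum>s\<in>block b. \<Sum>t\<in>block c. Q s t * (\<Sum>m<Suc n'. h m * mpow (block b) Q m r s * g (n' - m) t))"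
    by (simp only: sum_distrib_left)
  also have "\<dots> = (\<Sum>s\<in>block b. \<Sum>t\<in>block c. Q s t * delay (conv (\<lambda>m. h m * mpow (block b) Q m r s) (\<lambda>j. g j t)) n)"
    unfolding Suc delay_def conv_def by (simp add: lessThan_Suc_atMost)
  finally show ?thesis .
qed

lemma link_conv_growth_eq:
  assumes b: "b \<in> {1..k}" and r: "r \<in> block b" and p: "p \<le> 1" and R: "\<rho> b = R"
    and g: "\<forall>t\<in>block c. growth_limit R e (\<lambda>j. g j t) (w t)"
  shows "growth_limit R (p + e + 1) (\<lambda>n. link_conv (poly_weight p) b c g n r) (\<Sum>s\<in>block b. \<Sum>t\<in>block c. Q s t * (block_limit b r s * w t / R))"
proof -
  have R0: "R > 0" using rho_pos[OF b] R by simp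
  have "growth_limit R (p + e + 1) (\<lambda>n. \<Sum>s\<in>block b. \<Sum>t\<in>block c. Q s t * delay (conv (\<lambda>m. poly_weight p m * mpow (block b) Q m r s) (\<lambda>j. g j t)) n)
      (\<Sum>s\<in>block b. \<Sum>t\<in>block c. Q s t * (block_limit b r s * w t / R))"
  proof (intro growth_limit_sum finite_block growth_limit_cmult)
    fix s t assume s: "s \<in> block b" and t: "t \<in> block c"
    have "growth_limit R (p + e + 1) (conv (\<lambda>m. poly_weight p m * mpow (block b) Q m r s) (\<lambda>j. g j t)) (block_limit b r s * w t)"
      using growth_limit_conv_same_rate[OF R0 growth_limit_block[OF b r s p, unfolded R] g[rule_format, OF t]] .
    then show "growth_limit R (p + e + 1) (delay (conv (\<lambda>m. poly_weight p m * mpow (block b) Q m r s) (\<lambda>j. g j t))) (block_limit b r s * w t / R)"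
      by (rule growth_limit_delay[OF R0])
  qed
  then show ?thesis unfolding link_conv_eq_delay_conv .
qed

lemma link_conv_growth_gt:
  assumes b: "b \<in> {1..k}" and r: "r \<in> block b" and p: "p \<le> 1" and R: "R < \<rho> b" "R > 0"
    and g: "\<forall>t\<in>block c. growth_limit R e (\<lambda>j. g j t) (w t)"
  shows "growth_limit (\<rho> b) p (\<lambda>n. link_conv (poly_weight p) b c g n r) (\<Sum>s\<in>block b. \<Sum>t\<in>block c. Q s t * (block_limit b r s * (\<Sum>j. g j t / \<rho> b ^ j) / \<rho> b))"
    "\<forall>t\<in>block c. summable (\<lambda>j. g j t / \<rho> b ^ j)"
proof -
  have R0: "\<rho> b > 0" using rho_pos[OF b] by simp
  have "growth_limit (\<rho> b) p (\<lambda>n. \<Sum>s\<in>block b. \<Sum>t\<in>block c. Q s t * delay (conv (\<lambda>m. poly_weight p m * mpow (block b) Q m r s) (\<lambda>j. g j t)) n)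
      (\<Sum>s\<in>block b. \<Sum>t\<in>block c. Q s t * (block_limit b r s * (\<Sum>j. g j t / \<rho> b ^ j) / \<rho> b))"
  proof (intro growth_limit_sum finite_block growth_limit_cmult)
    fix s t assume s: "s \<in> block b" and t: "t \<in> block c"
    have "growth_limit (\<rho> b) p (conv (\<lambda>m. poly_weight p m * mpow (block b) Q m r s) (\<lambda>j. g j t)) (block_limit b r s * (\<Sum>j. g j t / \<rho> b ^ j))"
      using growth_limit_conv_faster(2)[OF R(2) R(1) growth_limit_block[OF b r s p] g[rule_format, OF t]] .
    then show "growth_limit (\<rho> b) p (delay (conv (\<lambda>m. poly_weight p m * mpow (block b) Q m r s) (\<lambda>j. g j t))) (block_limit b r s * (\<Sum>j. g j t / \<rho> b ^ j) / \<rho> b)"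
      by (rule growth_limit_delay[OF R0])
  qed
  then show "growth_limit (\<rho> b) p (\<lambda>n. link_conv (poly_weight p) b c g n r) (\<Sum>s\<in>block b. \<Sum>t\<in>block c. Q s t * (block_limit b r s * (\<Sum>j. g j t / \<rho> b ^ j) / \<rho> b))"
    unfolding link_conv_eq_delay_conv .
  obtain s where s: "s \<in> block b" using block_nonempty[OF b] r by blast
  show "\<forall>t\<in>block c. summable (\<lambda>j. g j t / \<rho> b ^ j)"
    using growth_limit_conv_faster(1)[OF R(2) R(1) growth_limit_block[OF b r s p] g[rule_format]] by blast
qed

lemma link_conv_growth_lt:
  assumes b: "b \<in> {1..k}" and c: "c \<in> {1..k}" and r: "r \<in> block b" and p: "p \<le> 1" and R: "\<rho> b < R"
    and g: "\<forall>t\<in>block c. growth_limit R e (\<lambda>j. g j t) (w t)"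
  shows "growth_limit R e (\<lambda>n. link_conv (poly_weight p) b c g n r) (\<Sum>s\<in>block b. \<Sum>t\<in>block c. Q s t * (w t * (\<Sum>m. poly_weight p m * mpow (block b) Q m r s / R ^ m) / R))"
    "\<forall>s\<in>block b. summable (\<lambda>m. poly_weight p m * mpow (block b) Q m r s / R ^ m)"
proof -
  have r0: "\<rho> b > 0" using rho_pos[OF b] by simp
  have R0: "R > 0" using r0 R by simp
  have "growth_limit R e (\<lambda>n. \<Sum>s\<in>block b. \<Sum>t\<in>block c. Q s t * delay (conv (\<lambda>m. poly_weight p m * mpow (block b) Q m r s) (\<lambda>j. g j t)) n)
      (\<Sum>s\<in>block b. \<Sum>t\<in>block c. Q s t * (w t * (\<Sum>m. poly_weight p m * mpow (block b) Q m r s / R ^ m) / R))"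
  proof (intro growth_limit_sum finite_block growth_limit_cmult)
    fix s t assume s: "s \<in> block b" and t: "t \<in> block c"
    have "growth_limit R e (conv (\<lambda>m. poly_weight p m * mpow (block b) Q m r s) (\<lambda>j. g j t)) (w t * (\<Sum>m. poly_weight p m * mpow (block b) Q m r s / R ^ m))"
      using growth_limit_conv_slower(2)[OF r0 R growth_limit_block[OF b r s p] g[rule_format, OF t]] .
    then show "growth_limit R e (delay (conv (\<lambda>m. poly_weight p m * mpow (block b) Q m r s) (\<lambda>j. g j t))) (w t * (\<Sum>m. poly_weight p m * mpow (block b) Q m r s / R ^ m) / R)"
      by (rule growth_limit_delay[OF R0])
  qed
  then show "growth_limit R e (\<lambda>n. link_conv (poly_weight p) b c g n r) (\<Sum>s\<in>block b. \<Sum>t\<in>block c. Q s t * (w t * (\<Sum>m. poly_weight p m * mpow (block b) Q m r s / R ^ m) / R))"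
    unfolding link_conv_eq_delay_conv .
  show "\<forall>s\<in>block b. summable (\<lambda>m. poly_weight p m * mpow (block b) Q m r s / R ^ m)"
  proof
    fix s assume s: "s \<in> block b"
    obtain t where t: "t \<in> block c" using block_nonempty[OF c] by blast
    show "summable (\<lambda>m. poly_weight p m * mpow (block b) Q m r s / R ^ m)"
      using growth_limit_conv_slower(1)[OF r0 R growth_limit_block[OF b r s p] g[rule_format, OF t]] .
  qed
qed

lemma link_conv_growth:
  assumes b: "b \<in> {1..k}" and c: "c \<in> {1..k}" and R: "R > 0"
    and g: "\<forall>t\<in>block c. growth_limit R e (\<lambda>j. g j t) (w t)"
  shows "\<exists>z. \<forall>r\<in>block b. growth_limit (max (\<rho> b) R) (if R < \<rho> b then 0 else if \<rho> b = R then e + 1 else e)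
           (\<lambda>n. link_conv (poly_weight 0) b c g n r) (z r)"
proof -
  consider (eq) "\<rho> b = R" | (gt) "R < \<rho> b" | (lt) "\<rho> b < R" by linarith
  then show ?thesis
  proof cases
    case eq
    then show ?thesis using link_conv_growth_eq[OF b _ _ eq g, of _ 0] by (intro exI) auto
  next
    case gt
    then show ?thesis using link_conv_growth_gt(1)[OF b _ _ gt R g, of _ 0] by (intro exI) auto
  next
    case lt
    then show ?thesis using link_conv_growth_lt(1)[OF b c _ _ lt g, of _ 0] by (intro exI) auto
  qed
qed

lemma link_conv_growth_weight_raise:
  assumes b: "b \<in> {1..k}" and r: "r \<in> block b" and R: "0 < R" "R \<le> \<rho> b"
    and g: "\<forall>t\<in>block c. growth_limit R e (\<lambda>j. g j t) (w t)"
  obtains z where "growth_limit (\<rho> b) (if R < \<rho> b then 0 else e + 1) (\<lambda>n. link_conv (poly_weight 0) b c g n r) z"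
    and "growth_limit (\<rho> b) (if R < \<rho> b then 1 else e + 2) (\<lambda>n. link_conv (poly_weight 1) b c g n r) z"
proof (cases "R < \<rho> b")
  case True
  then show ?thesis
    using link_conv_growth_gt(1)[OF b r _ True R(1) g, of 0] link_conv_growth_gt(1)[OF b r _ True R(1) g, of 1] that
    by simp
next
  case False
  then have "\<rho> b = R" using R(2) by simp
  then show ?thesis
    using link_conv_growth_eq[OF b r _ _ g, of 0] link_conv_growth_eq[OF b r _ _ g, of 1] that by simp
qed

lemma link_conv_growth_input_raise:
  assumes b: "b \<in> {1..k}" and c: "c \<in> {1..k}" and r: "r \<in> block b" and R: "\<rho> b \<le> R"
    and g: "\<forall>t\<in>block c. growth_limit R e (\<lambda>j. g j t) (w t)"
    and g': "\<forall>t\<in>block c. growth_limit R (e + 1) (\<lambda>j. g' j t) (w t)"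
  obtains z where "growth_limit R (if \<rho> b = R then e + 1 else e) (\<lambda>n. link_conv (poly_weight 0) b c g n r) z"
    and "growth_limit R (if \<rho> b = R then e + 2 else e + 1) (\<lambda>n. link_conv (poly_weight 0) b c g' n r) z"
proof (cases "\<rho> b = R")
  case True
  then show ?thesis
    using link_conv_growth_eq[OF b r _ True g, of 0] link_conv_growth_eq[OF b r _ True g', of 0] that by simp
next
  case False
  then have "\<rho> b < R" using R by simp
  then show ?thesis
    using link_conv_growth_lt(1)[OF b c r _ _ g, of 0] link_conv_growth_lt(1)[OF b c r _ _ g', of 0] that by simp
qed

lemma block_series_pos:
  assumes b: "b \<in> {1..k}" and r: "r \<in> block b" and s: "s \<in> block b" and R: "R > 0"
    and sm: "summable (\<lambda>m. poly_weight p m * mpow (block b) Q m r s / R ^ m)"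
  shows "(\<Sum>m. poly_weight p m * mpow (block b) Q m r s / R ^ m) > 0"
proof -
  obtain N where N: "\<forall>n\<ge>N. \<forall>r\<in>block b. \<forall>s\<in>block b. mpow (block b) Q n r s > 0"
    using evpos b unfolding eventually_positive_def by blast
  have "mpow (block b) Q N r s > 0" using N r s by blast
  then have "poly_weight p N * mpow (block b) Q N r s / R ^ N > 0" using poly_weight_pos[of p N] R by simp
  moreover have "\<forall>m. poly_weight p m * mpow (block b) Q m r s / R ^ m \<ge> 0"
    using poly_weight_pos mpow_nonneg[OF Q_nonneg_blocks[OF b b] r] R by (simp add: less_imp_le)
  ultimately show ?thesis by (intro suminf_pos2[OF sm]) auto
qed

lemma link_conv_growth_pos:
  assumes b: "b \<in> {1..k}" and c: "c \<in> {1..k}" and r: "r \<in> block b" and R: "R > 0"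
    and g: "\<forall>t\<in>block c. growth_limit R e (\<lambda>j. g j t) (w t)"
    and g_nonneg: "\<And>j t. t \<in> block c \<Longrightarrow> g j t \<ge> 0" and w_pos: "\<And>t. t \<in> block c \<Longrightarrow> w t > 0"
    and link: "\<exists>s\<in>block b. \<exists>t\<in>block c. Q s t \<noteq> 0"
  shows "\<exists>z>0. growth_limit (max (\<rho> b) R) (if R < \<rho> b then 0 else if \<rho> b = R then e + 1 else e)
           (\<lambda>n. link_conv (poly_weight 0) b c g n r) z"
proof -
  obtain s\<^sub>0 t\<^sub>0 where st: "s\<^sub>0 \<in> block b" "t\<^sub>0 \<in> block c" "Q s\<^sub>0 t\<^sub>0 > 0"
    using link Q_nonneg_blocks[OF b c] by (force simp: less_le)
  have pos: "(\<Sum>s\<in>block b. \<Sum>t\<in>block c. Q s t * x s t) > 0"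
    if "\<And>s t. s \<in> block b \<Longrightarrow> t \<in> block c \<Longrightarrow> x s t > 0" for x
    using double_sum_pos[where q = Q and x = x, OF finite_block finite_block st Q_nonneg_blocks[OF b c] that] .
  have \<rho>: "\<rho> b > 0" using rho_pos[OF b] .
  consider (eq) "\<rho> b = R" | (gt) "R < \<rho> b" | (lt) "\<rho> b < R" by linarith
  then show ?thesis
  proof cases
    case eq
    then show ?thesis
      using link_conv_growth_eq[OF b r _ eq g, of 0] pos[of "\<lambda>s t. block_limit b r s * w t / R"]
        block_limit_pos[OF b r] w_pos R by auto
  next
    case gt
    have "(\<Sum>j. g j t / \<rho> b ^ j) > 0" if t: "t \<in> block c" for t
    proof -
      obtain j where "g j t > 0"
        using growth_limit_pos_imp_ex_pos[OF g[rule_format, OF t] w_pos[OF t] R] by blast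
      then show ?thesis
        using g_nonneg[OF t] \<rho> link_conv_growth_gt(2)[OF b r _ gt R g, of 0] t
        by (intro suminf_pos2[of _ j]) auto
    qed
    then show ?thesis
      using link_conv_growth_gt(1)[OF b r _ gt R g, of 0] gt \<rho>
        pos[of "\<lambda>s t. block_limit b r s * (\<Sum>j. g j t / \<rho> b ^ j) / \<rho> b"] block_limit_pos[OF b r] by auto
  next
    case lt
    have "(\<Sum>m. poly_weight 0 m * mpow (block b) Q m r s / R ^ m) > 0" if "s \<in> block b" for s
      using block_series_pos[OF b r that R] link_conv_growth_lt(2)[OF b c r _ lt g, of 0] that by simp
    then show ?thesis
      using link_conv_growth_lt(1)[OF b c r _ lt g, of 0] lt R
        pos[of "\<lambda>s t. w t * (\<Sum>m. poly_weight 0 m * mpow (block b) Q m r s / R ^ m) / R"] w_pos by auto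
  qed
qed

fun path_rate :: "nat list \<Rightarrow> real" where
  "path_rate [] = 0"
| "path_rate [b] = \<rho> b"
| "path_rate (b # c # \<sigma>) = max (\<rho> b) (path_rate (c # \<sigma>))"

fun path_mult :: "nat list \<Rightarrow> nat" where
  "path_mult [] = 0"
| "path_mult [b] = 1"
| "path_mult (b # c # \<sigma>) = (if path_rate (c # \<sigma>) < \<rho> b then 1 else if \<rho> b = path_rate (c # \<sigma>) then Suc (path_mult (c # \<sigma>)) else path_mult (c # \<sigma>))"

fun linked :: "nat list \<Rightarrow> bool" where
  "linked [] = True"
| "linked [b] = True"
| "linked (b # c # \<sigma>) = ((\<exists>s\<in>block b. \<exists>t\<in>block c. Q s t \<noteq> 0) \<and> linked (c # \<sigma>))"

lemma path_mult_pos: "\<sigma> \<noteq> [] \<Longrightarrow> path_mult \<sigma> \<ge> 1"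
  by (induction \<sigma> rule: linked.induct) auto

lemma rho_le_path_rate: "x \<in> set \<sigma> \<Longrightarrow> \<rho> x \<le> path_rate \<sigma>"
  by (induction \<sigma> rule: path_rate.induct) auto

lemma path_rate_pos: "\<sigma> \<noteq> [] \<Longrightarrow> set \<sigma> \<subseteq> {1..k} \<Longrightarrow> path_rate \<sigma> > 0"
  by (induction \<sigma> rule: path_rate.induct) (auto simp: rho_pos max_def)

lemma link_conv_nonneg:
  assumes h: "\<forall>m. h m \<ge> 0" and b: "b \<in> {1..k}" and c: "c \<in> {1..k}" and r: "r \<in> block b"
    and g: "\<forall>j. \<forall>t\<in>block c. g j t \<ge> 0"
  shows "link_conv h b c g n r \<ge> 0"
  unfolding link_conv_def
  using h g mpow_nonneg[OF Q_nonneg_blocks[OF b b] r] Q_nonneg_blocks[OF b c]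
  by (intro sum_nonneg mult_nonneg_nonneg) auto

lemma path_surv_nonneg:
  "\<sigma> \<noteq> [] \<Longrightarrow> set \<sigma> \<subseteq> {1..k} \<Longrightarrow> r \<in> block (hd \<sigma>) \<Longrightarrow> path_surv \<sigma> n r \<ge> 0"
proof (induction \<sigma> arbitrary: n r rule: linked.induct)
  case 1 then show ?case by simp
next
  case (2 b)
  then show ?case using mpow_nonneg[OF Q_nonneg_blocks] by (auto intro: sum_nonneg)
next
  case (3 b c \<sigma>)
  then show ?case by (simp del: path_surv.simps(2), intro link_conv_nonneg) auto
qed

lemma path_surv_not_linked: "\<not> linked \<sigma> \<Longrightarrow> path_surv \<sigma> n r = 0"
proof (induction \<sigma> arbitrary: n r rule: linked.induct)
  case (3 b c \<sigma>)
  show ?case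
  proof (cases "\<exists>s\<in>block b. \<exists>t\<in>block c. Q s t \<noteq> 0")
    case True
    then have "\<not> linked (c # \<sigma>)" using 3 by simp
    then have "path_surv (c # \<sigma>) j t = 0" for j t using 3 by blast
    then show ?thesis by (simp add: link_conv_def)
  next
    case False
    then show ?thesis by (simp add: link_conv_def)
  qed
qed auto

lemma path_occ_not_member: "l \<notin> set \<sigma> \<Longrightarrow> path_occ l \<sigma> n r = 0"
proof (induction \<sigma> arbitrary: n r rule: linked.induct)
  case (3 b c \<sigma>)
  then have "path_occ l (c # \<sigma>) j t = 0" for j t by simp
  then show ?case using 3 by (simp add: link_conv_def)
qed auto

lemma path_occ_bounds:
  "\<sigma> \<noteq> [] \<Longrightarrow> set \<sigma> \<subseteq> {1..k} \<Longrightarrow> r \<in> block (hd \<sigma>) \<Longrightarrow> 0 \<le> path_occ l \<sigma> n r \<and> path_occ l \<sigma> n r \<le> (real n + 1) * path_surv \<sigma> n r"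
proof (induction \<sigma> arbitrary: n r rule: linked.induct)
  case 1 then show ?case by simp
next
  case (2 b)
  have "path_surv [b] n r \<ge> 0" using path_surv_nonneg[OF _ 2(2,3)] by simp
  then show ?case by (cases "b = l") (simp_all del: path_surv.simps)
next
  case (3 b c \<sigma>)
  have b: "b \<in> {1..k}" and c: "c \<in> {1..k}" and r: "r \<in> block b" using 3 by auto
  have IH: "0 \<le> path_occ l (c # \<sigma>) j t \<and> path_occ l (c # \<sigma>) j t \<le> (real j + 1) * path_surv (c # \<sigma>) j t" if "t \<in> block c" for j t
    using 3 that by auto
  have tail_nonneg: "path_surv (c # \<sigma>) j t \<ge> 0" if "t \<in> block c" for j t using path_surv_nonneg[of "c # \<sigma>"] 3 that by auto
  define visits_b where "visits_b m = (if b = l then real m + 1 else 0)" for m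
  have occ_eq: "path_occ l (b # c # \<sigma>) n r = (\<Sum>m<n. \<Sum>s\<in>block b. \<Sum>t\<in>block c. mpow (block b) Q m r s * Q s t *
      (path_occ l (c # \<sigma>) (n - 1 - m) t + visits_b m * path_surv (c # \<sigma>) (n - 1 - m) t))"
    unfolding visits_b_def by (cases "b = l") (simp_all add: link_conv_def sum.distrib algebra_simps)
  have surv_eq: "(real n + 1) * path_surv (b # c # \<sigma>) n r = (\<Sum>m<n. \<Sum>s\<in>block b. \<Sum>t\<in>block c. mpow (block b) Q m r s * Q s t *
      ((real n + 1) * path_surv (c # \<sigma>) (n - 1 - m) t))"
    by (simp add: link_conv_def sum_distrib_left algebra_simps)
  \<comment> \<open>the \<open>m + 1\<close> visits to block \<open>b\<close> and at most \<open>n - m\<close> later ones add up to at most \<open>n + 1\<close>\<close>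
  have inner_bounds: "0 \<le> path_occ l (c # \<sigma>) (n - 1 - m) t + visits_b m * path_surv (c # \<sigma>) (n - 1 - m) t \<and>
      path_occ l (c # \<sigma>) (n - 1 - m) t + visits_b m * path_surv (c # \<sigma>) (n - 1 - m) t \<le> (real n + 1) * path_surv (c # \<sigma>) (n - 1 - m) t"
    if "m < n" "t \<in> block c" for m t
  proof -
    have "real (n - 1 - m) + 1 + visits_b m \<le> real n + 1" using that unfolding visits_b_def by auto
    moreover have "visits_b m \<ge> 0" unfolding visits_b_def by auto
    ultimately show ?thesis using IH[OF that(2), of "n - 1 - m"] tail_nonneg[OF that(2), of "n - 1 - m"]
      by (smt (verit, best) mult_right_mono distrib_right mult_nonneg_nonneg)
  qed
  have weight_nonneg: "0 \<le> mpow (block b) Q m r s * Q s t" if "s \<in> block b" "t \<in> block c" for m s t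
    using mpow_nonneg[OF Q_nonneg_blocks[OF b b] r] Q_nonneg_blocks[OF b c that] by simp
  show ?case
  proof
    show "0 \<le> path_occ l (b # c # \<sigma>) n r" unfolding occ_eq
    proof (intro sum_nonneg)
      fix m s t assume "m \<in> {..<n}" "s \<in> block b" "t \<in> block c"
      then have "0 \<le> mpow (block b) Q m r s * Q s t" "0 \<le> path_occ l (c # \<sigma>) (n - 1 - m) t + visits_b m * path_surv (c # \<sigma>) (n - 1 - m) t"
        using inner_bounds weight_nonneg by auto
      then show "0 \<le> mpow (block b) Q m r s * Q s t * (path_occ l (c # \<sigma>) (n - 1 - m) t + visits_b m * path_surv (c # \<sigma>) (n - 1 - m) t)"
        by (rule mult_nonneg_nonneg)
    qed
    show "path_occ l (b # c # \<sigma>) n r \<le> (real n + 1) * path_surv (b # c # \<sigma>) n r" unfolding occ_eq surv_eq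
      using inner_bounds weight_nonneg by (intro sum_mono mult_left_mono) auto
  qed
qed

lemma path_mult_Cons_Cons:
  "path_mult (b # c # \<sigma>) - 1 = (if path_rate (c # \<sigma>) < \<rho> b then 0
     else if \<rho> b = path_rate (c # \<sigma>) then path_mult (c # \<sigma>) else path_mult (c # \<sigma>) - 1)"
  using path_mult_pos[of "c # \<sigma>"] by auto

lemma path_surv_growth:
  "\<sigma> \<noteq> [] \<Longrightarrow> sorted_wrt (>) \<sigma> \<Longrightarrow> set \<sigma> \<subseteq> {1..k} \<Longrightarrow>
   \<exists>w. (\<forall>r\<in>block (hd \<sigma>). growth_limit (path_rate \<sigma>) (path_mult \<sigma> - 1) (\<lambda>n. path_surv \<sigma> n r) (w r))
     \<and> (linked \<sigma> \<longrightarrow> (\<forall>r\<in>block (hd \<sigma>). w r > 0))"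
proof (induction \<sigma> rule: linked.induct)
  case (2 b)
  then have b: "b \<in> {1..k}" by simp
  have "growth_limit (\<rho> b) 0 (\<lambda>n. path_surv [b] n r) (\<Sum>s\<in>block b. block_limit b r s)" if "r \<in> block b" for r
    using growth_limit_sum[OF finite_block growth_limit_block[OF b that _ le0]] by (simp add: poly_weight_0)
  moreover have "(\<Sum>s\<in>block b. block_limit b r s) > 0" if "r \<in> block b" for r
    using block_limit_pos[OF b that] block_nonempty[OF b] finite_block by (intro sum_pos) auto
  ultimately show ?case by (intro exI[of _ "\<lambda>r. \<Sum>s\<in>block b. block_limit b r s"]) auto
next
  case (3 b c \<sigma>)
  have b: "b \<in> {1..k}" and c: "c \<in> {1..k}" using 3(4) by auto
  have tail: "c # \<sigma> \<noteq> []" "sorted_wrt (>) (c # \<sigma>)" "set (c # \<sigma>) \<subseteq> {1..k}" using 3 by auto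
  define R' where "R' = path_rate (c # \<sigma>)"
  obtain w' where w': "\<forall>t\<in>block c. growth_limit R' (path_mult (c # \<sigma>) - 1) (\<lambda>n. path_surv (c # \<sigma>) n t) (w' t)"
    and w'_pos: "linked (c # \<sigma>) \<Longrightarrow> t \<in> block c \<Longrightarrow> w' t > 0" for t
    using 3(1)[OF tail] unfolding R'_def by auto
  have R': "R' > 0" unfolding R'_def using path_rate_pos[OF tail(1,3)] .
  have order: "path_mult (b # c # \<sigma>) - 1 = (if R' < \<rho> b then 0 else if \<rho> b = R' then path_mult (c # \<sigma>) - 1 + 1
      else path_mult (c # \<sigma>) - 1)"
    using path_mult_Cons_Cons path_mult_pos[OF tail(1)] unfolding R'_def by simp
  have surv_eq: "path_surv (b # c # \<sigma>) n r = link_conv (poly_weight 0) b c (path_surv (c # \<sigma>)) n r" for n r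
    by (simp add: poly_weight_0)
  show ?case
  proof (cases "linked (b # c # \<sigma>)")
    case True
    then have link: "\<exists>s\<in>block b. \<exists>t\<in>block c. Q s t \<noteq> 0" and "linked (c # \<sigma>)" by simp_all
    have "\<exists>z>0. growth_limit (max (\<rho> b) R') (if R' < \<rho> b then 0 else if \<rho> b = R' then path_mult (c # \<sigma>) - 1 + 1
        else path_mult (c # \<sigma>) - 1) (\<lambda>n. link_conv (poly_weight 0) b c (path_surv (c # \<sigma>)) n r) z"
      if "r \<in> block b" for r
      by (rule link_conv_growth_pos[OF b c that R' w' path_surv_nonneg[OF tail(1,3), simplified]
            w'_pos[OF \<open>linked (c # \<sigma>)\<close>] link])
    then have "\<forall>r\<in>block b. \<exists>z. z > 0 \<and> growth_limit (path_rate (b # c # \<sigma>)) (path_mult (b # c # \<sigma>) - 1)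
        (\<lambda>n. path_surv (b # c # \<sigma>) n r) z"
      unfolding surv_eq order by (simp add: R'_def)
    then obtain w where "\<forall>r\<in>block b. w r > 0 \<and> growth_limit (path_rate (b # c # \<sigma>))
        (path_mult (b # c # \<sigma>) - 1) (\<lambda>n. path_surv (b # c # \<sigma>) n r) (w r)"
      by (erule bchoice[THEN exE])
    then show ?thesis by (intro exI[of _ w]) auto
  next
    case False
    obtain z where "\<forall>r\<in>block b. growth_limit (max (\<rho> b) R')
        (if R' < \<rho> b then 0 else if \<rho> b = R' then path_mult (c # \<sigma>) - 1 + 1 else path_mult (c # \<sigma>) - 1)
        (\<lambda>n. link_conv (poly_weight 0) b c (path_surv (c # \<sigma>)) n r) (z r)"
      using link_conv_growth[OF b c R' w'] by blast
    then show ?thesis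
      using False unfolding surv_eq order by (intro exI[of _ z]) (auto simp: R'_def)
  qed
qed simp

lemma path_occ_growth_head:
  assumes sorted: "sorted_wrt (>) (l # c # \<sigma>)" and set: "set (l # c # \<sigma>) \<subseteq> {1..k}"
    and top: "path_rate (c # \<sigma>) \<le> \<rho> l" and r: "r \<in> block l"
    and surv: "growth_limit (path_rate (l # c # \<sigma>)) (path_mult (l # c # \<sigma>) - 1) (\<lambda>n. path_surv (l # c # \<sigma>) n r) L"
  shows "growth_limit (path_rate (l # c # \<sigma>)) (path_mult (l # c # \<sigma>)) (\<lambda>n. path_occ l (l # c # \<sigma>) n r) L"
proof -
  have l: "l \<in> {1..k}" and tail: "c # \<sigma> \<noteq> []" "sorted_wrt (>) (c # \<sigma>)" "set (c # \<sigma>) \<subseteq> {1..k}"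
    using sorted set by auto
  define R' e' where "R' = path_rate (c # \<sigma>)" and "e' = path_mult (c # \<sigma>) - 1"
  obtain w' where w': "\<forall>t\<in>block c. growth_limit R' e' (\<lambda>n. path_surv (c # \<sigma>) n t) (w' t)"
    using path_surv_growth[OF tail] unfolding R'_def e'_def by auto
  have R': "R' > 0" unfolding R'_def using path_rate_pos[OF tail(1,3)] .
  have rate: "path_rate (l # c # \<sigma>) = \<rho> l" using top by simp
  have order: "path_mult (l # c # \<sigma>) - 1 = (if R' < \<rho> l then 0 else e' + 1)"
    using path_mult_Cons_Cons[of l c \<sigma>] path_mult_pos[OF tail(1)] top unfolding R'_def e'_def by auto
  have "l \<notin> set (c # \<sigma>)" using sorted by auto
  then have occ_eq: "path_occ l (l # c # \<sigma>) n r = link_conv (poly_weight 1) l c (path_surv (c # \<sigma>)) n r" for n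
    using path_occ_not_member by (simp add: poly_weight_def link_conv_def)
  obtain z where z: "growth_limit (\<rho> l) (if R' < \<rho> l then 0 else e' + 1) (\<lambda>n. link_conv (poly_weight 0) l c (path_surv (c # \<sigma>)) n r) z"
      "growth_limit (\<rho> l) (if R' < \<rho> l then 1 else e' + 2) (\<lambda>n. link_conv (poly_weight 1) l c (path_surv (c # \<sigma>)) n r) z"
    using link_conv_growth_weight_raise[OF l r R' top[folded R'_def] w'] by blast
  have "z = L"
    using growth_limit_unique[OF z(1)] surv unfolding rate order by (simp add: poly_weight_0)
  moreover have "path_mult (l # c # \<sigma>) = (if R' < \<rho> l then 1 else e' + 2)"
    using order path_mult_pos[of "l # c # \<sigma>"] by (simp split: if_splits)
  ultimately show ?thesis
    using z(2) unfolding rate occ_eq by simp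
qed

lemma path_occ_growth_top:
  "\<sigma> \<noteq> [] \<Longrightarrow> sorted_wrt (>) \<sigma> \<Longrightarrow> set \<sigma> \<subseteq> {1..k} \<Longrightarrow> l \<in> set \<sigma> \<Longrightarrow> path_rate \<sigma> = \<rho> l \<Longrightarrow>
   \<forall>r\<in>block (hd \<sigma>). growth_limit (path_rate \<sigma>) (path_mult \<sigma> - 1) (\<lambda>n. path_surv \<sigma> n r) (w r) \<Longrightarrow>
   \<forall>r\<in>block (hd \<sigma>). growth_limit (path_rate \<sigma>) (path_mult \<sigma>) (\<lambda>n. path_occ l \<sigma> n r) (w r)"
proof (induction \<sigma> arbitrary: w rule: linked.induct)
  case (2 b)
  show ?case
  proof
    fix r assume "r \<in> block (hd [b])"
    then have "growth_limit (\<rho> b) 0 (\<lambda>n. path_surv [b] n r) (w r)" using 2(6) by simp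
    then have "growth_limit (\<rho> b) 1 (\<lambda>n. (real n + 1) * path_surv [b] n r) (w r)"
      by (rule growth_limit_times_Suc)
    then show "growth_limit (path_rate [b]) (path_mult [b]) (\<lambda>n. path_occ l [b] n r) (w r)"
      using 2(4) by (simp del: path_surv.simps)
  qed
next
  case (3 b c \<sigma>)
  show ?case
  proof (cases "b = l")
    case True
    show ?thesis
    proof
      fix r assume "r \<in> block (hd (b # c # \<sigma>))"
      moreover have "path_rate (c # \<sigma>) \<le> \<rho> l" using 3(6) True by simp
      ultimately show "growth_limit (path_rate (b # c # \<sigma>)) (path_mult (b # c # \<sigma>)) (\<lambda>n. path_occ l (b # c # \<sigma>) n r) (w r)"
        using path_occ_growth_head[where c = c and \<sigma> = \<sigma> and r = r and L = "w r"] 3(3,4,7) True by simp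
    qed
  next
    case False
    have b: "b \<in> {1..k}" and c: "c \<in> {1..k}" using 3(4) by auto
    have tail: "c # \<sigma> \<noteq> []" "sorted_wrt (>) (c # \<sigma>)" "set (c # \<sigma>) \<subseteq> {1..k}" using 3 by auto
    have l: "l \<in> set (c # \<sigma>)" using 3(5) False by simp
    define R' e' where "R' = path_rate (c # \<sigma>)" and "e' = path_mult (c # \<sigma>) - 1"
    obtain w' where w': "\<forall>t\<in>block c. growth_limit R' e' (\<lambda>n. path_surv (c # \<sigma>) n t) (w' t)"
      using path_surv_growth[OF tail] unfolding R'_def e'_def by auto
    have mult: "path_mult (c # \<sigma>) = e' + 1" unfolding e'_def using path_mult_pos[OF tail(1)] by simp
    have "R' = \<rho> l" using 3(6) rho_le_path_rate[OF l] unfolding R'_def by simp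
    then have "\<rho> b \<le> R'" and rate: "path_rate (b # c # \<sigma>) = R'" using 3(6) unfolding R'_def by simp_all
    have order: "path_mult (b # c # \<sigma>) - 1 = (if \<rho> b = R' then e' + 1 else e')"
      using path_mult_Cons_Cons[of b c \<sigma>] mult \<open>\<rho> b \<le> R'\<close> unfolding R'_def by simp
    have occ_tail: "\<forall>t\<in>block c. growth_limit R' (e' + 1) (\<lambda>n. path_occ l (c # \<sigma>) n t) (w' t)"
      using 3(1)[OF tail l, of w'] w' \<open>R' = \<rho> l\<close> mult unfolding R'_def e'_def by simp
    show ?thesis
    proof
      fix r assume "r \<in> block (hd (b # c # \<sigma>))"
      then have r: "r \<in> block b" by simp
      obtain z where z: "growth_limit R' (if \<rho> b = R' then e' + 1 else e') (\<lambda>n. link_conv (poly_weight 0) b c (path_surv (c # \<sigma>)) n r) z"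
          "growth_limit R' (if \<rho> b = R' then e' + 2 else e' + 1) (\<lambda>n. link_conv (poly_weight 0) b c (path_occ l (c # \<sigma>)) n r) z"
        using link_conv_growth_input_raise[OF b c r \<open>\<rho> b \<le> R'\<close> w' occ_tail] by blast
      have "z = w r"
        using growth_limit_unique[OF z(1)] 3(7) r unfolding rate order by (simp add: poly_weight_0)
      moreover have "path_mult (b # c # \<sigma>) = (if \<rho> b = R' then e' + 2 else e' + 1)"
        using order path_mult_pos[of "b # c # \<sigma>"] by (simp split: if_splits)
      ultimately show "growth_limit (path_rate (b # c # \<sigma>)) (path_mult (b # c # \<sigma>)) (\<lambda>n. path_occ l (b # c # \<sigma>) n r) (w r)"
        using z(2) False unfolding rate by (simp add: poly_weight_0)
    qed
  qed
qed simp

lemma path_occ_growth_below: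
  "\<sigma> \<noteq> [] \<Longrightarrow> sorted_wrt (>) \<sigma> \<Longrightarrow> set \<sigma> \<subseteq> {1..k} \<Longrightarrow> l \<in> set \<sigma> \<Longrightarrow> \<rho> l < path_rate \<sigma> \<Longrightarrow>
   \<exists>z. \<forall>r\<in>block (hd \<sigma>). growth_limit (path_rate \<sigma>) (path_mult \<sigma> - 1) (\<lambda>n. path_occ l \<sigma> n r) (z r)"
proof (induction \<sigma> rule: linked.induct)
  case (3 b c \<sigma>)
  have b: "b \<in> {1..k}" and c: "c \<in> {1..k}" using 3(4) by auto
  have tail: "c # \<sigma> \<noteq> []" "sorted_wrt (>) (c # \<sigma>)" "set (c # \<sigma>) \<subseteq> {1..k}" using 3 by auto
  define R' e' where "R' = path_rate (c # \<sigma>)" and "e' = path_mult (c # \<sigma>) - 1"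
  obtain w' where w': "\<forall>t\<in>block c. growth_limit R' e' (\<lambda>n. path_surv (c # \<sigma>) n t) (w' t)"
    using path_surv_growth[OF tail] unfolding R'_def e'_def by auto
  have R': "R' > 0" unfolding R'_def using path_rate_pos[OF tail(1,3)] .
  have mult: "path_mult (c # \<sigma>) = e' + 1" unfolding e'_def using path_mult_pos[OF tail(1)] by simp
  have order: "path_mult (b # c # \<sigma>) - 1 = (if R' < \<rho> b then 0 else if \<rho> b = R' then e' + 1 else e')"
    using path_mult_Cons_Cons mult unfolding R'_def by simp
  have rate: "path_rate (b # c # \<sigma>) = max (\<rho> b) R'" unfolding R'_def by simp
  show ?case
  proof (cases "b = l")
    case True
    then have "l \<notin> set (c # \<sigma>)" using 3(3) by auto
    then have occ_eq: "path_occ l (b # c # \<sigma>) n r = link_conv (poly_weight 1) b c (path_surv (c # \<sigma>)) n r" for n r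
      using True path_occ_not_member by (simp add: poly_weight_def link_conv_def)
    have "\<rho> b < R'" using 3(6) True unfolding rate by (simp add: max_def split: if_splits)
    then show ?thesis
      using link_conv_growth_lt(1)[OF b c _ _ \<open>\<rho> b < R'\<close> w', of _ 1] unfolding occ_eq order rate
      by (intro exI) auto
  next
    case False
    then have l: "l \<in> set (c # \<sigma>)" using 3(5) by simp
    have occ_eq: "path_occ l (b # c # \<sigma>) n r = link_conv (poly_weight 0) b c (path_occ l (c # \<sigma>)) n r" for n r
      using False by (simp add: poly_weight_0)
    consider (lt) "\<rho> l < R'" | (eq) "\<rho> l = R'"
      using rho_le_path_rate[OF l] unfolding R'_def by fastforce
    then show ?thesis
    proof cases
      case lt
      obtain z' where "\<forall>t\<in>block c. growth_limit R' e' (\<lambda>n. path_occ l (c # \<sigma>) n t) (z' t)"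
        using 3(1)[OF tail l] lt unfolding R'_def e'_def by auto
      then show ?thesis using link_conv_growth[OF b c R'] unfolding occ_eq order rate by simp
    next
      case eq
      have "\<forall>t\<in>block c. growth_limit R' (e' + 1) (\<lambda>n. path_occ l (c # \<sigma>) n t) (w' t)"
        using path_occ_growth_top[OF tail l, of w'] eq w' mult unfolding R'_def e'_def by simp
      moreover have "R' < \<rho> b" using 3(6) eq unfolding rate by (simp add: max_def split: if_splits)
      ultimately show ?thesis using link_conv_growth[OF b c R'] unfolding occ_eq order rate by simp
    qed
  qed
qed auto

end

section \<open>Admissible paths\<close>

context frobenius_blocks
begin

lemma linked_iff: "linked \<sigma> \<longleftrightarrow> (\<forall>u. Suc u < length \<sigma> \<longrightarrow> (\<exists>r\<in>block (\<sigma> ! u). \<exists>s\<in>block (\<sigma> ! Suc u). Q r s \<noteq> 0))"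
proof (induction \<sigma> rule: linked.induct)
  case (3 b c \<sigma>)
  have "(\<forall>u. Suc u < length (b # c # \<sigma>) \<longrightarrow> (\<exists>r\<in>block ((b # c # \<sigma>) ! u). \<exists>s\<in>block ((b # c # \<sigma>) ! Suc u). Q r s \<noteq> 0))
    \<longleftrightarrow> (\<exists>r\<in>block b. \<exists>s\<in>block c. Q r s \<noteq> 0) \<and>
        (\<forall>u. Suc u < length (c # \<sigma>) \<longrightarrow> (\<exists>r\<in>block ((c # \<sigma>) ! u). \<exists>s\<in>block ((c # \<sigma>) ! Suc u). Q r s \<noteq> 0))"
    (is "?L \<longleftrightarrow> ?R")
  proof
    assume L: ?L
    show ?R
    proof
      show "\<exists>r\<in>block b. \<exists>s\<in>block c. Q r s \<noteq> 0" using L[rule_format, of 0] by simp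
      show "\<forall>u. Suc u < length (c # \<sigma>) \<longrightarrow> (\<exists>r\<in>block ((c # \<sigma>) ! u). \<exists>s\<in>block ((c # \<sigma>) ! Suc u). Q r s \<noteq> 0)"
        using L by (metis Suc_less_eq length_Cons nth_Cons_Suc)
    qed
  next
    assume R: ?R
    show ?L
    proof (intro allI impI)
      fix u assume "Suc u < length (b # c # \<sigma>)"
      then show "\<exists>r\<in>block ((b # c # \<sigma>) ! u). \<exists>s\<in>block ((b # c # \<sigma>) ! Suc u). Q r s \<noteq> 0"
        using R by (cases u) auto
    qed
  qed
  then show ?case using 3 by simp
qed auto

lemma admissible_iff: "admissible k ds Q \<sigma> \<longleftrightarrow> \<sigma> \<noteq> [] \<and> set \<sigma> \<subseteq> {1..k} \<and> sorted_wrt (>) \<sigma> \<and> linked \<sigma>"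
  unfolding admissible_def linked_iff by auto

lemma rho_path_eq_path_rate: "\<sigma> \<noteq> [] \<Longrightarrow> rho_path \<rho> \<sigma> = path_rate \<sigma>"
proof (induction \<sigma> rule: linked.induct)
  case (3 b c \<sigma>)
  have "rho_path \<rho> (b # c # \<sigma>) = Max (insert (\<rho> b) (\<rho> ` set (c # \<sigma>)))" unfolding rho_path_def by simp
  also have "\<dots> = max (\<rho> b) (Max (\<rho> ` set (c # \<sigma>)))" by (subst Max_insert) auto
  finally show ?case using 3 unfolding rho_path_def by simp
qed (auto simp: rho_path_def)

definition level_count :: "real \<Rightarrow> nat list \<Rightarrow> nat" where
  "level_count M \<sigma> = card {u. u < length \<sigma> \<and> \<rho> (\<sigma> ! u) = M}"

lemma level_count_Cons: "level_count M (b # \<sigma>) = (if \<rho> b = M then 1 else 0) + level_count M \<sigma>"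
proof -
  have "{u. u < length (b # \<sigma>) \<and> \<rho> ((b # \<sigma>) ! u) = M} = (if \<rho> b = M then {0} else {}) \<union> Suc ` {u. u < length \<sigma> \<and> \<rho> (\<sigma> ! u) = M}"
  proof (rule set_eqI)
    fix u show "u \<in> {u. u < length (b # \<sigma>) \<and> \<rho> ((b # \<sigma>) ! u) = M} \<longleftrightarrow> u \<in> (if \<rho> b = M then {0} else {}) \<union> Suc ` {u. u < length \<sigma> \<and> \<rho> (\<sigma> ! u) = M}"
      by (cases u) auto
  qed
  then show ?thesis unfolding level_count_def by (simp add: card_image)
qed

lemma level_count_eq_0: "\<forall>x\<in>set \<sigma>. \<rho> x < M \<Longrightarrow> level_count M \<sigma> = 0"
  by (induction \<sigma>) (auto simp: level_count_Cons, simp add: level_count_def)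

lemma hplus_eq_path_mult: "\<sigma> \<noteq> [] \<Longrightarrow> hplus \<rho> \<sigma> = path_mult \<sigma>"
proof -
  have "\<sigma> \<noteq> [] \<Longrightarrow> level_count (path_rate \<sigma>) \<sigma> = path_mult \<sigma>"
  proof (induction \<sigma> rule: linked.induct)
    case (2 b)
    have "{u. u < length [b] \<and> \<rho> ([b] ! u) = \<rho> b} = {0}" by auto
    then show ?case by (simp add: level_count_def)
  next
    case (3 b c \<sigma>)
    define R' where "R' = path_rate (c # \<sigma>)"
    consider (gt) "R' < \<rho> b" | (eq) "\<rho> b = R'" | (lt) "\<rho> b < R'" by linarith
    then show ?case
    proof cases
      case gt
      have "\<forall>x\<in>set (c # \<sigma>). \<rho> x < \<rho> b" using rho_le_path_rate[of _ "c # \<sigma>"] gt unfolding R'_def by force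
      then show ?thesis using gt unfolding R'_def by (simp add: level_count_Cons level_count_eq_0)
    next
      case eq then show ?thesis using 3 unfolding R'_def by (simp add: level_count_Cons)
    next
      case lt then show ?thesis using 3 unfolding R'_def by (simp add: level_count_Cons)
    qed
  qed simp
  moreover assume "\<sigma> \<noteq> []"
  ultimately show ?thesis unfolding hplus_def rho_path_eq_path_rate[OF \<open>\<sigma> \<noteq> []\<close>] level_count_def by simp
qed

lemma admissible_subset_dec_paths: "{\<sigma>\<in>Padm k ds Q. P \<sigma>} \<subseteq> (\<Union>i\<in>{1..k}. dec_paths i)"
proof
  fix \<sigma> assume "\<sigma> \<in> {\<sigma>\<in>Padm k ds Q. P \<sigma>}"
  then have a: "\<sigma> \<noteq> []" "set \<sigma> \<subseteq> {1..k}" "sorted_wrt (>) \<sigma>" using admissible_iff unfolding Padm_def by auto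
  then have "hd \<sigma> \<in> {1..k}" by (cases \<sigma>) auto
  moreover have "\<sigma> \<in> dec_paths (hd \<sigma>)" using a unfolding dec_paths_def by auto
  ultimately show "\<sigma> \<in> (\<Union>i\<in>{1..k}. dec_paths i)" by blast
qed

lemma path_rate_le_rho_max: "\<sigma> \<noteq> [] \<Longrightarrow> set \<sigma> \<subseteq> {1..k} \<Longrightarrow> path_rate \<sigma> \<le> rho_max k \<rho>"
  unfolding rho_path_eq_path_rate[symmetric] rho_path_def rho_max_def
  by (intro Max_mono) auto

lemma other_paths_slower:
  assumes uniq: "Pmax k ds Q \<rho> = {\<theta>}" and i: "i \<in> {1..k}" and \<sigma>: "\<sigma> \<in> dec_paths i" "linked \<sigma>" "\<sigma> \<noteq> \<theta>"
  shows "path_rate \<sigma> < rho_max k \<rho> \<or> (path_rate \<sigma> = rho_max k \<rho> \<and> path_mult \<sigma> < hplus_max k ds Q \<rho>)"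
proof -
  have a: "\<sigma> \<noteq> []" "set \<sigma> \<subseteq> {1..k}" "sorted_wrt (>) \<sigma>" using \<sigma> unfolding dec_paths_def by auto
  have adm: "\<sigma> \<in> Padm k ds Q" unfolding Padm_def using admissible_iff a \<sigma>(2) by auto
  have le: "path_rate \<sigma> \<le> rho_max k \<rho>" using path_rate_le_rho_max[OF a(1,2)] .
  show ?thesis
  proof (cases "path_rate \<sigma> = rho_max k \<rho>")
    case True
    have rp: "rho_path \<rho> \<sigma> = rho_max k \<rho>" using True rho_path_eq_path_rate[OF a(1)] by simp
    have fin: "finite {hplus \<rho> \<theta> |\<theta>. \<theta> \<in> Padm k ds Q \<and> rho_path \<rho> \<theta> = rho_max k \<rho>}"
    proof -
      have "{hplus \<rho> \<theta> |\<theta>. \<theta> \<in> Padm k ds Q \<and> rho_path \<rho> \<theta> = rho_max k \<rho>}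
          = hplus \<rho> ` {\<theta>\<in>Padm k ds Q. rho_path \<rho> \<theta> = rho_max k \<rho>}" by auto
      moreover have "finite {\<theta>\<in>Padm k ds Q. rho_path \<rho> \<theta> = rho_max k \<rho>}"
        by (rule finite_subset[OF admissible_subset_dec_paths]) (auto intro: finite_dec_paths)
      ultimately show ?thesis by simp
    qed
    have "hplus \<rho> \<sigma> \<le> hplus_max k ds Q \<rho>" unfolding hplus_max_def
      by (rule Max_ge[OF fin]) (use adm rp in auto)
    moreover have "hplus \<rho> \<sigma> \<noteq> hplus_max k ds Q \<rho>"
    proof
      assume "hplus \<rho> \<sigma> = hplus_max k ds Q \<rho>"
      then have "\<sigma> \<in> Pmax k ds Q \<rho>" unfolding Pmax_def using adm rp by auto
      then show False using uniq \<sigma>(3) by auto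
    qed
    ultimately show ?thesis using True hplus_eq_path_mult[OF a(1)] by simp
  next
    case False then show ?thesis using le by simp
  qed
qed

lemma sum_blocks: "(\<Sum>r\<in>{1..d}. f r) = (\<Sum>i\<in>{1..k}. \<Sum>r\<in>block i. f r)"
  unfolding UN_blocks
proof (rule sum.UNION_disjoint)
  show "\<forall>i\<in>{1..k}. \<forall>j\<in>{1..k}. i \<noteq> j \<longrightarrow> block i \<inter> block j = {}" using block_disjoint by blast
qed (auto simp: finite_block)

end

section \<open>The limit of the conditional occupation\<close>

context frobenius_blocks
begin

lemma sum_survival_eq_sum_dec_paths:
  "(\<Sum>r\<in>{1..d}. \<pi> r * survival d Q n r) = (\<Sum>i\<in>{1..k}. \<Sum>\<sigma>\<in>dec_paths i. \<Sum>r\<in>block i. \<pi> r * path_surv \<sigma> n r)"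
  unfolding sum_blocks
  by (intro sum.cong refl) (simp add: survival_eq_sum_path_surv sum_distrib_left sum.swap[of _ "block _"])

lemma sum_occupation_eq_sum_dec_paths:
  assumes "l \<in> {1..k}"
  shows "(\<Sum>r\<in>{1..d}. \<pi> r * occupation d Q (block l) n r)
    = (\<Sum>i\<in>{1..k}. \<Sum>\<sigma>\<in>dec_paths i. \<Sum>r\<in>block i. \<pi> r * path_occ l \<sigma> n r)"
  unfolding sum_blocks
  by (intro sum.cong refl)
     (simp add: occupation_eq_sum_path_occ[OF _ _ assms] sum_distrib_left sum.swap[of _ "block _"])

lemma growth_limit_sum_dec_paths_single:
  assumes "i\<^sub>0 \<in> {1..k}" "\<theta> \<in> dec_paths i\<^sub>0" "growth_limit R e (f i\<^sub>0 \<theta>) K"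
    and "\<And>i \<sigma>. i \<in> {1..k} \<Longrightarrow> \<sigma> \<in> dec_paths i \<Longrightarrow> \<sigma> \<noteq> \<theta> \<Longrightarrow> growth_limit R e (f i \<sigma>) 0"
  shows "growth_limit R e (\<lambda>n. \<Sum>i\<in>{1..k}. \<Sum>\<sigma>\<in>dec_paths i. f i \<sigma> n) K"
proof -
  have \<theta>_in: "\<theta> \<in> dec_paths i \<longleftrightarrow> i = i\<^sub>0" for i
    using assms(2) unfolding dec_paths_def by auto
  have "growth_limit R e (f i \<sigma>) (if \<sigma> = \<theta> then K else 0)" if "i \<in> {1..k}" "\<sigma> \<in> dec_paths i" for i \<sigma>
    using assms(3) assms(4)[OF that] \<theta>_in[of i] that(2) by (cases "\<sigma> = \<theta>") auto
  then have "growth_limit R e (\<lambda>n. \<Sum>i\<in>{1..k}. \<Sum>\<sigma>\<in>dec_paths i. f i \<sigma> n)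
      (\<Sum>i\<in>{1..k}. \<Sum>\<sigma>\<in>dec_paths i. if \<sigma> = \<theta> then K else 0)"
    by (intro growth_limit_sum finite_dec_paths) auto
  moreover have "(\<Sum>i\<in>{1..k}. \<Sum>\<sigma>\<in>dec_paths i. if \<sigma> = \<theta> then K else 0) = K"
    using assms(1) \<theta>_in by (simp add: sum.delta' finite_dec_paths if_distrib[of "\<lambda>b. if b then K else 0"] cong: if_cong)
  ultimately show ?thesis by simp
qed

context
  fixes \<pi> :: "nat \<Rightarrow> real" and \<theta> :: "nat list"
  assumes pi_nonneg: "\<forall>i\<in>{1..d}. \<pi> i \<ge> 0" and unique: "Pmax k ds Q \<rho> = {\<theta>}"
begin

lemma theta_properties:
  shows "\<theta> \<noteq> []" "set \<theta> \<subseteq> {1..k}" "sorted_wrt (>) \<theta>" "linked \<theta>"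
    and "hd \<theta> \<in> {1..k}" "\<theta> \<in> dec_paths (hd \<theta>)"
    and "path_rate \<theta> = rho_max k \<rho>" "path_mult \<theta> = hplus_max k ds Q \<rho>"
proof -
  have \<theta>: "\<theta> \<in> Pmax k ds Q \<rho>" using unique by simp
  then show \<theta>_adm: "\<theta> \<noteq> []" "set \<theta> \<subseteq> {1..k}" "sorted_wrt (>) \<theta>" "linked \<theta>"
    unfolding Pmax_def Padm_def admissible_iff by auto
  then show "hd \<theta> \<in> {1..k}" "\<theta> \<in> dec_paths (hd \<theta>)"
    unfolding dec_paths_def by (auto simp: neq_Nil_conv)
  show "path_rate \<theta> = rho_max k \<rho>" "path_mult \<theta> = hplus_max k ds Q \<rho>"
    using \<theta> rho_path_eq_path_rate[OF \<theta>_adm(1)] hplus_eq_path_mult[OF \<theta>_adm(1)] unfolding Pmax_def by auto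
qed

lemma other_path_surv_negligible:
  assumes i: "i \<in> {1..k}" and \<sigma>: "\<sigma> \<in> dec_paths i" "\<sigma> \<noteq> \<theta>"
  shows "growth_limit (rho_max k \<rho>) (hplus_max k ds Q \<rho> - 1) (\<lambda>n. \<Sum>r\<in>block i. \<pi> r * path_surv \<sigma> n r) 0"
proof (cases "linked \<sigma>")
  case True
  have \<sigma>_props: "\<sigma> \<noteq> []" "sorted_wrt (>) \<sigma>" "set \<sigma> \<subseteq> {1..k}" "hd \<sigma> = i"
    using \<sigma>(1) unfolding dec_paths_def by auto
  obtain w where "\<forall>r\<in>block i. growth_limit (path_rate \<sigma>) (path_mult \<sigma> - 1) (\<lambda>n. path_surv \<sigma> n r) (w r)"
    using path_surv_growth[OF \<sigma>_props(1-3)] \<sigma>_props(4) by blast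
  then have "growth_limit (path_rate \<sigma>) (path_mult \<sigma> - 1) (\<lambda>n. \<Sum>r\<in>block i. \<pi> r * path_surv \<sigma> n r) (\<Sum>r\<in>block i. \<pi> r * w r)"
    by (intro growth_limit_sum finite_block growth_limit_cmult) auto
  moreover have "path_rate \<sigma> < rho_max k \<rho> \<or> (path_rate \<sigma> = rho_max k \<rho> \<and> path_mult \<sigma> - 1 < hplus_max k ds Q \<rho> - 1)"
    using other_paths_slower[OF unique i \<sigma>(1) True \<sigma>(2)] path_mult_pos[OF \<sigma>_props(1)] by auto
  ultimately show ?thesis
    by (rule growth_limit_dominated[OF path_rate_pos[OF \<sigma>_props(1,3)]])
next
  case False
  then show ?thesis by (simp add: path_surv_not_linked growth_limit_zero)
qed

lemma other_path_occ_negligible: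
  assumes i: "i \<in> {1..k}" and \<sigma>: "\<sigma> \<in> dec_paths i" "\<sigma> \<noteq> \<theta>"
  shows "growth_limit (rho_max k \<rho>) (hplus_max k ds Q \<rho> - 1)
    (\<lambda>n. (\<Sum>r\<in>block i. \<pi> r * path_occ l \<sigma> n r) / (real n + 1)) 0"
proof (rule growth_limit_squeeze[OF other_path_surv_negligible[OF assms]])
  show "rho_max k \<rho> > 0"
    using path_rate_pos[OF theta_properties(1,2)] theta_properties(7) by simp
  have \<sigma>_props: "\<sigma> \<noteq> []" "set \<sigma> \<subseteq> {1..k}" "hd \<sigma> = i"
    using \<sigma>(1) unfolding dec_paths_def by auto
  have \<pi>: "\<pi> r \<ge> 0" if "r \<in> block i" for r
    using pi_nonneg block_subset[OF i] that by auto
  have bounds: "0 \<le> path_occ l \<sigma> n r" "path_occ l \<sigma> n r \<le> (real n + 1) * path_surv \<sigma> n r"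
    if "r \<in> block i" for n r
    using path_occ_bounds[OF \<sigma>_props(1,2)] \<sigma>_props(3) that by auto
  show "0 \<le> (\<Sum>r\<in>block i. \<pi> r * path_occ l \<sigma> n r) / (real n + 1)" for n
    using bounds \<pi> by (intro divide_nonneg_pos sum_nonneg mult_nonneg_nonneg) auto
  have "(\<Sum>r\<in>block i. \<pi> r * path_occ l \<sigma> n r) \<le> (real n + 1) * (\<Sum>r\<in>block i. \<pi> r * path_surv \<sigma> n r)" for n
    unfolding sum_distrib_left using bounds \<pi>
    by (intro sum_mono) (auto simp: mult.left_commute intro: mult_left_mono)
  then show "(\<Sum>r\<in>block i. \<pi> r * path_occ l \<sigma> n r) / (real n + 1) \<le> (\<Sum>r\<in>block i. \<pi> r * path_surv \<sigma> n r)" for n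
    by (simp add: divide_le_eq mult.commute)
qed

lemma theta_path_occ_growth:
  assumes l: "l \<in> set \<theta>" and r: "r \<in> block (hd \<theta>)"
    and surv: "\<forall>r\<in>block (hd \<theta>). growth_limit (rho_max k \<rho>) (hplus_max k ds Q \<rho> - 1) (\<lambda>n. path_surv \<theta> n r) (w r)"
  shows "growth_limit (rho_max k \<rho>) (hplus_max k ds Q \<rho> - 1) (\<lambda>n. path_occ l \<theta> n r / (real n + 1))
    (if \<rho> l = rho_max k \<rho> then w r / real (hplus_max k ds Q \<rho>) else 0)"
proof -
  note \<theta> = theta_properties
  define H where "H = hplus_max k ds Q \<rho> - 1"
  have H: "path_mult \<theta> = Suc H" "hplus_max k ds Q \<rho> = Suc H"
    using path_mult_pos[OF \<theta>(1)] \<theta>(8) unfolding H_def by auto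
  show ?thesis
  proof (cases "\<rho> l = rho_max k \<rho>")
    case True
    then have "growth_limit (rho_max k \<rho>) (Suc H) (\<lambda>n. path_occ l \<theta> n r) (w r)"
      using path_occ_growth_top[OF \<theta>(1,3,2) l, of w] surv r \<theta>(7) H unfolding H_def by simp
    then have "growth_limit (rho_max k \<rho>) H (\<lambda>n. path_occ l \<theta> n r / (real n + 1)) (w r / (real H + 1))"
      by (rule growth_limit_div_Suc)
    moreover have "real H + 1 = real (hplus_max k ds Q \<rho>)" using H(2) by simp
    ultimately show ?thesis using True unfolding H_def by simp
  next
    case False
    then have "\<rho> l < path_rate \<theta>" using rho_le_path_rate[OF l] \<theta>(7) by simp
    then obtain z where "growth_limit (rho_max k \<rho>) H (\<lambda>n. path_occ l \<theta> n r) (z r)"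
      using path_occ_growth_below[OF \<theta>(1,3,2) l] \<theta>(7) H r by auto
    then show ?thesis using growth_limit_div_Suc_zero False unfolding H_def by simp
  qed
qed

lemma theta_asymptotics:
  assumes l: "l \<in> set \<theta>" and pi_v: "(\<Sum>r\<in>block (hd \<theta>). \<pi> r * v (hd \<theta>) r) \<noteq> 0"
  obtains K where "K > 0"
    "growth_limit (rho_max k \<rho>) (hplus_max k ds Q \<rho> - 1) (\<lambda>n. \<Sum>r\<in>block (hd \<theta>). \<pi> r * path_surv \<theta> n r) K"
    "growth_limit (rho_max k \<rho>) (hplus_max k ds Q \<rho> - 1)
       (\<lambda>n. (\<Sum>r\<in>block (hd \<theta>). \<pi> r * path_occ l \<theta> n r) / (real n + 1))
       (if \<rho> l = rho_max k \<rho> then K / real (hplus_max k ds Q \<rho>) else 0)"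
proof -
  note \<theta> = theta_properties
  define i\<^sub>0 Rm H where "i\<^sub>0 = hd \<theta>" and "Rm = rho_max k \<rho>" and "H = hplus_max k ds Q \<rho> - 1"
  obtain w where w: "\<And>r. r \<in> block i\<^sub>0 \<Longrightarrow> growth_limit Rm H (\<lambda>n. path_surv \<theta> n r) (w r)"
    "\<And>r. r \<in> block i\<^sub>0 \<Longrightarrow> w r > 0"
    using path_surv_growth[OF \<theta>(1,3,2)] \<theta>(4,7,8) unfolding i\<^sub>0_def Rm_def H_def by auto
  have \<pi>: "\<pi> r \<ge> 0" if "r \<in> block i\<^sub>0" for r
    using pi_nonneg block_subset[OF \<theta>(5)] that unfolding i\<^sub>0_def by auto
  define K where "K = (\<Sum>r\<in>block i\<^sub>0. \<pi> r * w r)"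
  have "K > 0"
  proof -
    obtain r where r: "r \<in> block i\<^sub>0" "\<pi> r \<noteq> 0"
      using pi_v unfolding i\<^sub>0_def[symmetric] by (metis (no_types, lifting) mult_eq_0_iff sum.neutral)
    show ?thesis
      unfolding K_def using r \<pi> w(2) finite_block
      by (intro sum_pos2[of _ r]) (auto simp: less_le intro: mult_nonneg_nonneg)
  qed
  moreover have "growth_limit Rm H (\<lambda>n. \<Sum>r\<in>block i\<^sub>0. \<pi> r * path_surv \<theta> n r) K"
    unfolding K_def using w(1) by (intro growth_limit_sum finite_block growth_limit_cmult)
  moreover have "growth_limit Rm H (\<lambda>n. (\<Sum>r\<in>block i\<^sub>0. \<pi> r * path_occ l \<theta> n r) / (real n + 1))
      (if \<rho> l = Rm then K / real (hplus_max k ds Q \<rho>) else 0)"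
  proof -
    have "growth_limit Rm H (\<lambda>n. \<Sum>r\<in>block i\<^sub>0. \<pi> r * (path_occ l \<theta> n r / (real n + 1)))
        (\<Sum>r\<in>block i\<^sub>0. \<pi> r * (if \<rho> l = Rm then w r / real (hplus_max k ds Q \<rho>) else 0))"
      using theta_path_occ_growth[OF l _ ballI[OF w(1)[unfolded i\<^sub>0_def Rm_def H_def]]]
      unfolding i\<^sub>0_def Rm_def H_def by (intro growth_limit_sum finite_block growth_limit_cmult) auto
    moreover have "(\<Sum>r\<in>block i\<^sub>0. \<pi> r * (if \<rho> l = Rm then w r / real (hplus_max k ds Q \<rho>) else 0))
        = (if \<rho> l = Rm then K / real (hplus_max k ds Q \<rho>) else 0)"
      unfolding K_def by (simp add: sum_divide_distrib)
    ultimately show ?thesis by (simp add: sum_divide_distrib)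
  qed
  ultimately show ?thesis using that unfolding i\<^sub>0_def Rm_def H_def by blast
qed

theorem cond_occupation_limit:
  assumes l: "l \<in> set \<theta>" and pi_v: "(\<Sum>r\<in>block (hd \<theta>). \<pi> r * v (hd \<theta>) r) \<noteq> 0"
  shows "(\<lambda>n. cond_occupation d \<pi> R Q (block l) n)
    \<longlonglongrightarrow> (if \<rho> l = rho_max k \<rho> then 1 / real (hplus_max k ds Q \<rho>) else 0)"
proof -
  note \<theta> = theta_properties
  define Rm H where "Rm = rho_max k \<rho>" and "H = hplus_max k ds Q \<rho> - 1"
  obtain K where K: "K > 0"
    "growth_limit Rm H (\<lambda>n. \<Sum>r\<in>block (hd \<theta>). \<pi> r * path_surv \<theta> n r) K"
    "growth_limit Rm H (\<lambda>n. (\<Sum>r\<in>block (hd \<theta>). \<pi> r * path_occ l \<theta> n r) / (real n + 1))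
       (if \<rho> l = Rm then K / real (hplus_max k ds Q \<rho>) else 0)"
    using theta_asymptotics[OF l pi_v] unfolding Rm_def H_def by blast
  have l_block: "l \<in> {1..k}" using l \<theta>(2) by auto
  have "growth_limit Rm H (\<lambda>n. \<Sum>r\<in>{1..d}. \<pi> r * survival d Q n r) K"
    unfolding sum_survival_eq_sum_dec_paths Rm_def H_def
    by (rule growth_limit_sum_dec_paths_single[where f = "\<lambda>i \<sigma> n. \<Sum>r\<in>block i. \<pi> r * path_surv \<sigma> n r",
          OF \<theta>(5,6) K(2)[unfolded Rm_def H_def] other_path_surv_negligible])
  moreover have "growth_limit Rm H (\<lambda>n. (\<Sum>r\<in>{1..d}. \<pi> r * occupation d Q (block l) n r) / (real n + 1))
      (if \<rho> l = Rm then K / real (hplus_max k ds Q \<rho>) else 0)"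
  proof -
    have "(\<Sum>r\<in>{1..d}. \<pi> r * occupation d Q (block l) n r) / (real n + 1)
        = (\<Sum>i\<in>{1..k}. \<Sum>\<sigma>\<in>dec_paths i. (\<Sum>r\<in>block i. \<pi> r * path_occ l \<sigma> n r) / (real n + 1))" for n
      unfolding sum_occupation_eq_sum_dec_paths[OF l_block] by (simp only: sum_divide_distrib)
    then show ?thesis
      unfolding Rm_def H_def
      by (simp only:) (rule growth_limit_sum_dec_paths_single[
          where f = "\<lambda>i \<sigma> n. (\<Sum>r\<in>block i. \<pi> r * path_occ l \<sigma> n r) / (real n + 1)",
          OF \<theta>(5,6) K(3)[unfolded Rm_def H_def] other_path_occ_negligible])
  qed
  ultimately have "(\<lambda>n. ((\<Sum>r\<in>{1..d}. \<pi> r * occupation d Q (block l) n r) / (real n + 1) / (negbin H n * Rm ^ n))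
      / ((\<Sum>r\<in>{1..d}. \<pi> r * survival d Q n r) / (negbin H n * Rm ^ n)))
      \<longlonglongrightarrow> (if \<rho> l = Rm then K / real (hplus_max k ds Q \<rho>) else 0) / K"
    unfolding growth_limit_def using \<open>K > 0\<close> by (intro tendsto_divide) auto
  moreover have "(if \<rho> l = Rm then K / real (hplus_max k ds Q \<rho>) else 0) / K
      = (if \<rho> l = rho_max k \<rho> then 1 / real (hplus_max k ds Q \<rho>) else 0)"
    using \<open>K > 0\<close> unfolding Rm_def by simp
  moreover have "Rm > 0" using path_rate_pos[OF \<theta>(1,2)] \<theta>(7) unfolding Rm_def by simp
  ultimately show ?thesis
    unfolding cond_occupation_eq by simp
qed

end

end

theorem corollary3p16:
  fixes d k :: nat and ds :: "nat \<Rightarrow> nat"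
    and R :: "nat \<Rightarrow> real" and Q :: "nat \<Rightarrow> nat \<Rightarrow> real" and \<pi> :: "nat \<Rightarrow> real"
    and \<rho> :: "nat \<Rightarrow> real" and v :: "nat \<Rightarrow> nat \<Rightarrow> real"
    and \<theta> :: "nat list" and l :: nat
  assumes d_ge: "d \<ge> 2"
    and blocks: "d = (\<Sum>i\<in>{1..k}. ds i)" "\<forall>i\<in>{1..k}. ds i > 0"
    \<comment> \<open>P is stochastic\<close>
    and R_nonneg: "\<forall>i\<in>{1..d}. R i \<ge> 0"
    and Q_nonneg: "\<forall>i\<in>{1..d}. \<forall>j\<in>{1..d}. Q i j \<ge> 0"
    and rows: "\<forall>i\<in>{1..d}. R i + (\<Sum>j\<in>{1..d}. Q i j) = 1"
    and R_nz: "\<exists>i\<in>{1..d}. R i \<noteq> 0"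
    and Q_nz: "\<exists>i\<in>{1..d}. \<exists>j\<in>{1..d}. Q i j \<noteq> 0"
    and spec_Q: "\<forall>\<mu>. eigenvalue_on {1..d} (cmat Q) \<mu> \<longrightarrow> cmod \<mu> < 1"
    \<comment> \<open>Frobenius normal form\<close>
    and lower: "\<forall>i\<in>{1..k}. \<forall>j\<in>{1..k}. j > i \<longrightarrow>
                  (\<forall>r\<in>blk ds i. \<forall>s\<in>blk ds j. Q r s = 0)"
    and evpos: "\<forall>i\<in>{1..k}. eventually_positive (blk ds i) Q"
    \<comment> \<open>Perron--Frobenius eigenvalue and positive right eigenvector of Q_ii\<close>
    and pf_eig: "\<forall>i\<in>{1..k}. eigenvalue_on (blk ds i) (cmat Q) (complex_of_real (\<rho> i))"
    and pf_max: "\<forall>i\<in>{1..k}. \<forall>\<mu>. eigenvalue_on (blk ds i) (cmat Q) \<mu> \<longrightarrow> cmod \<mu> \<le> \<rho> i"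
    and v_pos: "\<forall>i\<in>{1..k}. \<forall>r\<in>blk ds i. v i r > 0"
    and v_eig: "\<forall>i\<in>{1..k}. \<forall>r\<in>blk ds i. mvec (blk ds i) Q (v i) r = \<rho> i * v i r"
    \<comment> \<open>initial distribution on {1..d}\<close>
    and pi_nonneg: "\<forall>i\<in>{1..d}. \<pi> i \<ge> 0"
    and pi_sum: "(\<Sum>i\<in>{1..d}. \<pi> i) = 1"
    \<comment> \<open>(A1)\<close>
    and A1: "\<forall>i\<in>{1..k}. \<rho> i < rho_max k \<rho> \<longrightarrow> is_scalar_on (blk ds i) Q"
    \<comment> \<open>(A2)\<close>
    and A2: "\<exists>\<theta>'\<in>Pmax k ds Q \<rho>. alpha_path ds Q \<rho> v \<theta>' \<noteq> 0 \<and>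
               (\<Sum>r\<in>blk ds (hd \<theta>'). \<pi> r * v (hd \<theta>') r) \<noteq> 0"
    \<comment> \<open>unique maximal admissible path\<close>
    and unique: "Pmax k ds Q \<rho> = {\<theta>}"
    and l_on: "l \<in> set \<theta>"
  shows "(\<rho> l = rho_max k \<rho> \<longrightarrow>
            ((\<lambda>n. cond_occupation d \<pi> R Q (blk ds l) n) \<longlonglongrightarrow> 1 / real (hplus_max k ds Q \<rho>)))
       \<and> (\<rho> l < rho_max k \<rho> \<longrightarrow>
            ((\<lambda>n. cond_occupation d \<pi> R Q (blk ds l) n) \<longlonglongrightarrow> 0))"
proof -
  interpret frobenius_blocks d k ds Q \<rho> v
    using blocks Q_nonneg lower evpos v_pos v_eig by unfold_locales
  obtain \<theta>' where "\<theta>' \<in> Pmax k ds Q \<rho>" "(\<Sum>r\<in>blk ds (hd \<theta>'). \<pi> r * v (hd \<theta>') r) \<noteq> 0"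
    using A2 by blast
  then have "(\<Sum>r\<in>blk ds (hd \<theta>). \<pi> r * v (hd \<theta>) r) \<noteq> 0"
    using unique by simp
  then have "(\<lambda>n. cond_occupation d \<pi> R Q (blk ds l) n)
      \<longlonglongrightarrow> (if \<rho> l = rho_max k \<rho> then 1 / real (hplus_max k ds Q \<rho>) else 0)"
    by (rule cond_occupation_limit[OF pi_nonneg unique l_on])
  then show ?thesis by auto
qed

end
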